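(* Let $D$ be an oriented link diagram and let $\mathfrak F(D)$ be the space of pairs (shaping $\chi$ of $D$, flattening $\mathfrak f$ of $(D,\chi)$) in which, at every non-pinched crossing, $\kappa$ is chosen to be the principal logarithm $\kappa=\frac{1}{2\pi i}\operatorname{Log}K$, topologized as a subset of $\mathbb C^{N}$ via the parameters $(\mu_j)_j,(\beta_k)_k,(\gamma_R)_R$ (which determine the shaping). Then $\mathcal V(D,\chi,\mathfrak f)$ is a continuous function on $\mathfrak F(D)$ with values in $\mathbb C/2\pi^2 i\mathbb Z$; in particular, the pinched-crossing formula is the limit of the non-pinched formula as a crossing becomes pinched.
   Context: Oriented link diagram $D$; segments are edges of its underlying $4$-valent planar graph, regions are components of the complement. At each crossing, rotate so both strands point right; label incoming upper-left segment $1$, incoming lower-left segment $2$, outgoing lower-right $1'$ (continuation of $1$), outgoing upper-right $2'$ (continuation of $2$); regions $N$ (top), $S$ (bottom), $W$ (left), $E$ (right); $\epsilon=\pm1$ the crossing sign. A shaping assigns $\chi_i=(a_i,b_i,m_i)\in(\mathbb C^\times)^3$ to segments with, at each crossing, $m_{1'}=m_1,m_{2'}=m_2$ and (positive) $A=1-\frac{m_1b_1}{b_2}(1-\frac{a_1}{m_1})(1-\frac{1}{m_2a_2})$, $a_{1'}=a_1/A$, $a_{2'}=a_2A$, $b_{1'}=\frac{m_2b_2}{m_1}(1-m_2a_2(1-\frac{b_2}{m_1b_1}))^{-1}$, $b_{2'}=b_1(1-\frac{m_1}{a_1}(1-\frac{b_2}{m_1b_1}))$, or (negative) $\tilde A=1-\frac{b_2}{m_1b_1}(1-m_1a_1)(1-\frac{m_2}{a_2})$,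 $a_{1'}=a_1/\tilde A$, $a_{2'}=a_2\tilde A$, $b_{1'}=\frac{m_2b_2}{m_1}(1-\frac{a_2}{m_2}(1-\frac{m_1b_1}{b_2}))$, $b_{2'}=b_1(1-\frac{1}{m_1a_1}(1-\frac{m_1b_1}{b_2}))^{-1}$, all finite nonzero. Pinched: $b_{2'}=b_1$. Flattening: $\mu_j$ per component ($e^{2\pi i\mu_j}=m_j$), $\beta_k$ per segment ($e^{2\pi i\beta_k}=b_k$), $\gamma_R$ per region ($e^{2\pi i(\gamma_{R'}-\gamma_R)}=a_k$ when $R',R$ lie right, left of segment $k$), $\kappa$ at each non-pinched crossing with $e^{2\pi i\kappa}=K=e^{2\pi i\gamma_N}/(1-(b_{2'}/b_1)^\epsilon)$. Lifted dilogarithm: for $w=e^{\zeta^0}\ne1$, $e^{\zeta^1}(1-w)=1$, $p^0=(\zeta^0-\operatorname{Log}w)/2\pi i$, $p^1=(\zeta^1+\operatorname{Log}(1-w))/2\pi i$, $\mathcal L(\zeta^0,\zeta^1)=\operatorname{Li}_2(w)+\frac12\operatorname{Log}w\operatorname{Log}(1-w)-\frac{\pi^2}6+\pi i(p^0\operatorname{Log}(1-w)+p^1\operatorname{Log}w)\in\mathbb C/2\pi^2\mathbb Z$ (continuous extension understood). Non-pinched crossing: $\zeta_N^0=2\pi i\epsilon(\beta_{2'}-\beta_1)$, $\zeta_N^1=2\pi i(\kappa-\gamma_N)$; $\zeta_W^0=2\pi i\epsilon(\beta_2-\beta_1-\mu_1)$, $\zeta_W^1=2\pi i(\kappa-\gamma_W+\epsilon\mu_1)$;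 $\zeta_S^0=2\pi i\epsilon(\beta_2-\beta_{1'}+\mu_2-\mu_1)$, $\zeta_S^1=2\pi i(\kappa-\gamma_S+\epsilon(\mu_1-\mu_2))$; $\zeta_E^0=2\pi i\epsilon(\beta_{2'}-\beta_{1'}+\mu_2)$, $\zeta_E^1=2\pi i(\kappa-\gamma_E-\epsilon\mu_2)$; $\mathcal V(c,\mathfrak f)=-i\epsilon[\mathcal L(\zeta_N^0,\zeta_N^1)-\mathcal L(\zeta_W^0,\zeta_W^1)+\mathcal L(\zeta_S^0,\zeta_S^1)-\mathcal L(\zeta_E^0,\zeta_E^1)]$. Pinched crossing: $\mathcal V(c,\mathfrak f)=2\pi^2 i[\beta_1(\gamma_W-\gamma_N)-\beta_{1'}(\gamma_S-\gamma_E)+\beta_2(\gamma_S-\gamma_W)-\beta_{2'}(\gamma_E-\gamma_N)-\mu_1(\epsilon(\beta_1-\beta_{1'}+\mu_2)+\gamma_S-\gamma_W)-\mu_2(\epsilon(\beta_{2'}-\beta_2+\mu_1)+\gamma_E-\gamma_S)]$. Diagram volume $\mathcal V(D,\chi,\mathfrak f)=\sum_c\mathcal V(c,\mathfrak f)\in\mathbb C/2\pi^2 i\mathbb Z$. *)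

theory Defs
  imports "HOL-Analysis.Analysis"
begin

text \<open>At each crossing c (rotated so that both strands point right):
  seg1 c  = incoming upper-left segment (label 1),
  seg2 c  = incoming lower-left segment (label 2),
  seg1' c = outgoing lower-right segment (label 1', continuation of 1),
  seg2' c = outgoing upper-right segment (label 2', continuation of 2),
  regN, regS, regW, regE the four adjacent regions, sgn c the crossing sign.
  comp k is the link component of segment k; lreg k / rreg k are the regions
  lying to the left / right of segment k (w.r.t. its orientation).\<close>

record ('c, 's, 'r, 'j) diagram =
  crossings :: "'c set"
  seg1  :: "'c \<Rightarrow> 's"
  seg2  :: "'c \<Rightarrow> 's"
  seg1' :: "'c \<Rightarrow> 's"
  seg2' :: "'c \<Rightarrow> 's"
  regN :: "'c \<Rightarrow> 'r"
  regS :: "'c \<Rightarrow> 'r"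
  regW :: "'c \<Rightarrow> 'r"
  regE :: "'c \<Rightarrow> 'r"
  sgn  :: "'c \<Rightarrow> int"
  comp :: "'s \<Rightarrow> 'j"
  lreg :: "'s \<Rightarrow> 'r"
  rreg :: "'s \<Rightarrow> 'r"

definition link_diagram :: "('c, 's, 'r, 'j) diagram \<Rightarrow> bool" where
  "link_diagram D \<longleftrightarrow> finite (crossings D) \<and>
     (\<forall>c\<in>crossings D.
        (sgn D c = 1 \<or> sgn D c = -1) \<and>
        comp D (seg1' D c) = comp D (seg1 D c) \<and>
        comp D (seg2' D c) = comp D (seg2 D c) \<and>
        lreg D (seg1 D c) = regN D c \<and> rreg D (seg1 D c) = regW D c \<and>
        lreg D (seg2 D c) = regW D c \<and> rreg D (seg2 D c) = regS D c \<and>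
        lreg D (seg1' D c) = regE D c \<and> rreg D (seg1' D c) = regS D c \<and>
        lreg D (seg2' D c) = regN D c \<and> rreg D (seg2' D c) = regE D c)"

text \<open>A parameter point is (mu, beta, gamma): mu per component, beta per segment,
  gamma per region.\<close>
type_synonym ('s, 'r, 'j) params = "('j \<Rightarrow> complex) \<times> ('s \<Rightarrow> complex) \<times> ('r \<Rightarrow> complex)"

definition e2pi :: "complex \<Rightarrow> complex" where
  "e2pi z = exp (2 * of_real pi * \<i> * z)"

definition shp_m :: "('c, 's, 'r, 'j) diagram \<Rightarrow> ('s, 'r, 'j) params \<Rightarrow> 's \<Rightarrow> complex" where
  "shp_m D p k = e2pi (fst p (comp D k))"

definition shp_b :: "('s, 'r, 'j) params \<Rightarrow> 's \<Rightarrow> complex" where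
  "shp_b p k = e2pi (fst (snd p) k)"

definition shp_a :: "('c, 's, 'r, 'j) diagram \<Rightarrow> ('s, 'r, 'j) params \<Rightarrow> 's \<Rightarrow> complex" where
  "shp_a D p k = e2pi (snd (snd p) (rreg D k) - snd (snd p) (lreg D k))"

text \<open>The shaping equations at a crossing (all quantities finite and nonzero; the
  exponential parameters are automatically nonzero, so finiteness/nonvanishing
  amounts to the nonvanishing of the displayed denominators / factors).\<close>
definition shaping_at :: "('c, 's, 'r, 'j) diagram \<Rightarrow> ('s, 'r, 'j) params \<Rightarrow> 'c \<Rightarrow> bool" where
  "shaping_at D p c \<longleftrightarrow>
    (let m1 = shp_m D p (seg1 D c); m2 = shp_m D p (seg2 D c);
         a1 = shp_a D p (seg1 D c); a2 = shp_a D p (seg2 D c);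
         b1 = shp_b p (seg1 D c); b2 = shp_b p (seg2 D c);
         a1' = shp_a D p (seg1' D c); a2' = shp_a D p (seg2' D c);
         b1' = shp_b p (seg1' D c); b2' = shp_b p (seg2' D c)
     in if sgn D c = 1 then
          (let A = 1 - m1 * b1 / b2 * (1 - a1 / m1) * (1 - 1 / (m2 * a2));
               Q = 1 - m2 * a2 * (1 - b2 / (m1 * b1))
           in A \<noteq> 0 \<and> Q \<noteq> 0 \<and> a1' = a1 / A \<and> a2' = a2 * A \<and>
              b1' = m2 * b2 / m1 / Q \<and>
              b2' = b1 * (1 - m1 / a1 * (1 - b2 / (m1 * b1))))
        else
          (let At = 1 - b2 / (m1 * b1) * (1 - m1 * a1) * (1 - m2 / a2);
               Q = 1 - 1 / (m1 * a1) * (1 - m1 * b1 / b2)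
           in At \<noteq> 0 \<and> Q \<noteq> 0 \<and> a1' = a1 / At \<and> a2' = a2 * At \<and>
              b1' = m2 * b2 / m1 * (1 - a2 / m2 * (1 - m1 * b1 / b2)) \<and>
              b2' = b1 / Q))"

definition flat_space :: "('c, 's, 'r, 'j) diagram \<Rightarrow> ('s, 'r, 'j) params set" where
  "flat_space D = {p. \<forall>c\<in>crossings D. shaping_at D p c}"

text \<open>Principal dilogarithm Li2(w) = - int_0^w Log(1-t)/t dt along the segment [0,w],
  with the principal logarithm (on the cut the value is the boundary value matching
  the principal Log(1-w)).\<close>
definition Li2 :: "complex \<Rightarrow> complex" where
  "Li2 w = - integral {0..1::real} (\<lambda>t. Ln (1 - of_real t * w) / of_real t)"

definition lifted_dilog :: "complex \<Rightarrow> complex \<Rightarrow> complex" where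
  "lifted_dilog z0 z1 =
     (let w = exp z0;
          p0 = (z0 - Ln w) / (2 * of_real pi * \<i>);
          p1 = (z1 + Ln (1 - w)) / (2 * of_real pi * \<i>)
      in Li2 w + Ln w * Ln (1 - w) / 2 - of_real (pi^2) / 6
         + of_real pi * \<i> * (p0 * Ln (1 - w) + p1 * Ln w))"

definition pinched :: "('c, 's, 'r, 'j) diagram \<Rightarrow> ('s, 'r, 'j) params \<Rightarrow> 'c \<Rightarrow> bool" where
  "pinched D p c \<longleftrightarrow> shp_b p (seg2' D c) = shp_b p (seg1 D c)"

definition crossing_vol :: "('c, 's, 'r, 'j) diagram \<Rightarrow> ('s, 'r, 'j) params \<Rightarrow> 'c \<Rightarrow> complex" where
  "crossing_vol D p c =
    (let mu = fst p; beta = fst (snd p); gamma = snd (snd p);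
         \<epsilon> = of_int (sgn D c) :: complex;
         tpi = 2 * of_real pi * \<i>;
         mu1 = mu (comp D (seg1 D c)); mu2 = mu (comp D (seg2 D c));
         be1 = beta (seg1 D c); be2 = beta (seg2 D c);
         be1' = beta (seg1' D c); be2' = beta (seg2' D c);
         gN = gamma (regN D c); gS = gamma (regS D c);
         gW = gamma (regW D c); gE = gamma (regE D c)
     in if pinched D p c then
          2 * of_real (pi^2) * \<i> *
            (be1 * (gW - gN) - be1' * (gS - gE) + be2 * (gS - gW) - be2' * (gE - gN)
             - mu1 * (\<epsilon> * (be1 - be1' + mu2) + gS - gW)
             - mu2 * (\<epsilon> * (be2' - be2 + mu1) + gE - gS))
        else
          (let K = e2pi gN / (1 - (shp_b p (seg2' D c) / shp_b p (seg1 D c)) powi sgn D c);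
               \<kappa> = Ln K / tpi
           in - \<i> * \<epsilon> *
              (lifted_dilog (tpi * \<epsilon> * (be2' - be1)) (tpi * (\<kappa> - gN))
               - lifted_dilog (tpi * \<epsilon> * (be2 - be1 - mu1)) (tpi * (\<kappa> - gW + \<epsilon> * mu1))
               + lifted_dilog (tpi * \<epsilon> * (be2 - be1' + mu2 - mu1)) (tpi * (\<kappa> - gS + \<epsilon> * (mu1 - mu2)))
               - lifted_dilog (tpi * \<epsilon> * (be2' - be1' + mu2)) (tpi * (\<kappa> - gE - \<epsilon> * mu2)))))"

definition diagram_vol :: "('c, 's, 'r, 'j) diagram \<Rightarrow> ('s, 'r, 'j) params \<Rightarrow> complex" where
  "diagram_vol D p = (\<Sum>c\<in>crossings D. crossing_vol D p c)"

text \<open>f : S \<rightarrow> C, viewed as a map S \<rightarrow> C/PZ, is continuous (quotient topology).\<close>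
definition continuous_mod_on :: "complex \<Rightarrow> 'a::topological_space set \<Rightarrow> ('a \<Rightarrow> complex) \<Rightarrow> bool" where
  "continuous_mod_on P S f \<longleftrightarrow>
     (\<forall>x\<in>S. \<forall>e>0. \<forall>\<^sub>F y in at x within S. \<exists>n::int. cmod (f y - f x - of_int n * P) < e)"

end

theory Submission
  imports Defs "HOL-Complex_Analysis.Complex_Analysis"
begin

text \<open>A crossing contributes four lifted dilogarithms \<open>L(\<zeta>\<^sup>0, \<zeta>\<^sup>1)\<close> whose arguments depend
  continuously on the parameters, except that \<open>\<zeta>\<^sup>1\<close> contains \<open>\<kappa> = Log K / 2\<pi>i\<close>, which jumps by
  integers and is unbounded near a pinched crossing. Modulo \<open>2\<pi>\<^sup>2\<close>, \<open>L(\<zeta>\<^sup>0, \<zeta>\<^sup>1)\<close> agrees with an expression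
  continuous in \<open>(\<zeta>\<^sup>0, \<zeta>\<^sup>1)\<close>: one built from \<open>Li\<^sub>2(e\<^sup>\<zeta>\<^sup>0)\<close> while \<open>e\<^sup>\<zeta>\<^sup>0\<close> avoids \<open>[1, \<infinity>)\<close>, and one built
  from the reflection formula \<open>Li\<^sub>2(w) + Li\<^sub>2(1 - w) + Log w Log(1 - w) = const\<close> while \<open>e\<^sup>\<zeta>\<^sup>0\<close> avoids
  \<open>(-\<infinity>, 0]\<close>. A jump of \<open>\<kappa>\<close> by \<open>j\<close> changes \<open>L(\<zeta>\<^sup>0, \<zeta>\<^sup>1)\<close> by \<open>j \<pi>i \<zeta>\<^sup>0\<close>, and these changes cancel
  because the alternating sum of the four \<open>\<zeta>\<^sup>0\<close> vanishes. Near a pinched crossing all \<open>e\<^sup>\<zeta>\<^sup>0\<close> tend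
  to 1; using the reflected expressions for all four terms, \<open>Log K\<close> only multiplies alternating
  sums that vanish, and what remains tends to the pinched formula.\<close>

section \<open>The dilogarithm off the cut \<open>[1, \<infinity>)\<close>\<close>

definition Li2_domain :: "complex set" where
  "Li2_domain = {z. 1 - z \<notin> \<real>\<^sub>\<le>\<^sub>0}"

lemma Li2_domain_iff: "z \<in> Li2_domain \<longleftrightarrow> Im z \<noteq> 0 \<or> Re z < 1"
  by (auto simp: Li2_domain_def complex_nonpos_Reals_iff)

lemma open_Li2_domain: "open Li2_domain"
proof -
  have eq: "Li2_domain = {z. Im z \<noteq> 0} \<union> {z. Re z < 1}"
    by (auto simp: Li2_domain_iff)
  show ?thesis
    unfolding eq by (intro open_Un open_Collect_neq open_Collect_less continuous_intros)
qed

lemma segment_subset_Li2_domain: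
  assumes "w \<in> Li2_domain" shows "closed_segment 0 w \<subseteq> Li2_domain"
proof
  fix y assume "y \<in> closed_segment 0 w"
  then obtain u where u: "0 \<le> u" "u \<le> 1" "y = u *\<^sub>R w"
    by (auto simp: closed_segment_def)
  have "u * Re w < 1" if "Re w < 1"
  proof (cases "Re w \<ge> 0")
    case True
    then show ?thesis using u that mult_left_le_one_le[of "Re w" u] by linarith
  next
    case False
    then show ?thesis using u mult_nonneg_nonpos[of u "Re w"] by linarith
  qed
  then show "y \<in> Li2_domain"
    using assms u by (auto simp: Li2_domain_iff)
qed

lemma starlike_Li2_domain: "starlike Li2_domain"
  unfolding starlike_def using segment_subset_Li2_domain
  by (intro bexI[of _ 0]) (auto simp: Li2_domain_iff)

definition Li2_kernel :: "complex \<Rightarrow> complex" where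
  "Li2_kernel z = (if z = 0 then -1 else Ln (1 - z) / z)"

lemma holomorphic_Li2_kernel: "Li2_kernel holomorphic_on Li2_domain"
proof -
  have "((\<lambda>z. Ln (1 - z)) has_field_derivative inverse (1 - 0) * (-1)) (at (0::complex))"
    by (rule DERIV_chain2[where f=Ln]) (auto intro!: derivative_eq_intros simp: complex_nonpos_Reals_iff)
  then have deriv: "deriv (\<lambda>z. Ln (1 - z)) 0 = -1"
    by (simp add: DERIV_imp_deriv)
  have "(\<lambda>z. Ln (1 - z)) holomorphic_on Li2_domain"
    by (intro holomorphic_intros) (auto simp: Li2_domain_def)
  then have "(\<lambda>z. if z = 0 then deriv (\<lambda>z. Ln (1 - z)) 0 else (Ln (1 - z) - Ln (1 - 0)) / (z - 0))
      holomorphic_on Li2_domain"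
    by (rule pole_lemma_open[OF _ open_Li2_domain])
  then show ?thesis
    by (rule holomorphic_transform) (simp add: Li2_kernel_def deriv)
qed

lemma Li2_kernel_scaled:
  "t \<noteq> 0 \<Longrightarrow> Li2_kernel (of_real t * w) * w = Ln (1 - of_real t * w) / of_real t"
  by (cases "w = 0") (auto simp: Li2_kernel_def)

lemma Li2_eq_contour_integral: "Li2 w = - contour_integral (linepath 0 w) Li2_kernel"
proof -
  have "contour_integral (linepath 0 w) Li2_kernel
      = integral {0..1} (\<lambda>t. Li2_kernel (of_real t * w) * w)"
    by (simp add: contour_integral_integral linepath_def scaleR_conv_of_real)
  also have "\<dots> = integral {0..1} (\<lambda>t. Ln (1 - of_real t * w) / of_real t)"
    by (rule integral_spike[of "{0}"]) (auto simp: Li2_kernel_scaled)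
  finally show ?thesis
    by (simp add: Li2_def)
qed

lemma Li2_integrand_integrable:
  assumes "w \<in> Li2_domain"
  shows "(\<lambda>t. Ln (1 - of_real t * w) / of_real t) integrable_on {0..1}"
proof -
  have "of_real t * w \<in> closed_segment 0 w" if "t \<in> {0..1}" for t
    using that by (auto simp: closed_segment_def scaleR_conv_of_real intro!: exI[of _ t])
  then have "(\<lambda>t. of_real t * w) ` {0..1} \<subseteq> Li2_domain"
    using segment_subset_Li2_domain[OF assms] by auto
  then have "continuous_on {0..1} (\<lambda>t. Li2_kernel (of_real t * w) * w)"
    by (intro continuous_intros continuous_on_compose2[OF holomorphic_on_imp_continuous_on[OF holomorphic_Li2_kernel]])
  then have "(\<lambda>t. Li2_kernel (of_real t * w) * w) integrable_on {0..1}"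
    by (rule integrable_continuous_interval)
  then show ?thesis
    by (rule integrable_spike[of _ _ "{0}"]) (auto simp: Li2_kernel_scaled)
qed

lemma Li2_has_field_derivative:
  assumes w: "w \<in> Li2_domain"
  shows "(Li2 has_field_derivative - Li2_kernel w) (at w)"
proof -
  have "\<exists>G. \<forall>z\<in>Li2_domain. (G has_field_derivative Li2_kernel z) (at z)"
    by (rule holomorphic_starlike_primitive[OF holomorphic_on_imp_continuous_on[OF holomorphic_Li2_kernel]
          starlike_Li2_domain open_Li2_domain, of "{}"])
      (use holomorphic_Li2_kernel open_Li2_domain holomorphic_on_imp_differentiable_at in auto)
  then obtain G where G: "\<And>z. z \<in> Li2_domain \<Longrightarrow> (G has_field_derivative Li2_kernel z) (at z)"
    by blast
  have eq: "Li2 z = G 0 - G z" if "z \<in> Li2_domain" for z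
  proof -
    have "(Li2_kernel has_contour_integral G (pathfinish (linepath 0 z)) - G (pathstart (linepath 0 z)))
        (linepath 0 z)"
      by (rule contour_integral_primitive[OF has_field_derivative_at_within[OF G] valid_path_linepath])
        (use segment_subset_Li2_domain[OF that] in auto)
    then show ?thesis
      by (simp add: Li2_eq_contour_integral contour_integral_unique)
  qed
  have "((\<lambda>z. G 0 - G z) has_field_derivative - Li2_kernel w) (at w)"
    using G[OF w] by (auto intro!: derivative_eq_intros)
  then show ?thesis
    by (rule has_field_derivative_transform_within_open[OF _ open_Li2_domain w]) (simp add: eq)
qed

lemma isCont_Li2: "w \<in> Li2_domain \<Longrightarrow> isCont Li2 w"
  using Li2_has_field_derivative DERIV_isCont by blast

section \<open>Boundary values of the dilogarithm on the cut\<close>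

lemma minus_ln_le_two_div_sqrt:
  assumes "0 < (v::real)" shows "- ln v \<le> 2 / sqrt v"
proof -
  have "ln (1 / sqrt v) \<le> 1 / sqrt v - 1" using assms by (intro ln_le_minus_one) simp
  moreover have "ln (1 / sqrt v) = - ln v / 2" using assms by (simp add: ln_div ln_sqrt)
  ultimately show ?thesis by (simp add: field_simps)
qed

lemma norm_Ln_le:
  assumes "Re w \<noteq> 0" "cmod w \<le> B" "1 \<le> B"
  shows "cmod (Ln w) \<le> ln B + 2 / sqrt \<bar>Re w\<bar> + pi"
proof -
  have w: "w \<noteq> 0" using assms(1) by auto
  have "\<bar>ln (cmod w)\<bar> \<le> ln B + 2 / sqrt \<bar>Re w\<bar>"
  proof (cases "cmod w \<ge> 1")
    case True
    then have "ln (cmod w) \<le> ln B" using assms(2) by (subst ln_le_cancel_iff) auto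
    moreover have "0 \<le> ln (cmod w)" using True by simp
    moreover have "0 \<le> 2 / sqrt \<bar>Re w\<bar>" by simp
    ultimately show ?thesis by linarith
  next
    case False
    have "ln \<bar>Re w\<bar> \<le> ln (cmod w)"
      using assms(1) abs_Re_le_cmod[of w] by (subst ln_le_cancel_iff) auto
    then have "\<bar>ln (cmod w)\<bar> \<le> - ln \<bar>Re w\<bar>" using False w by simp
    also have "\<dots> \<le> 2 / sqrt \<bar>Re w\<bar>" using assms(1) by (intro minus_ln_le_two_div_sqrt) simp
    finally show ?thesis using ln_ge_zero[OF assms(3)] by linarith
  qed
  moreover have "\<bar>Im (Ln w)\<bar> \<le> pi"
    using mpi_less_Im_Ln[OF w] Im_Ln_le_pi[OF w] by linarith
  ultimately show ?thesis
    using cmod_le[of "Ln w"] w by simp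
qed

lemma norm_Ln_one_minus_le: "cmod z \<le> 1/2 \<Longrightarrow> cmod (Ln (1 - z)) \<le> 2 * cmod z"
proof -
  assume z: "cmod z \<le> 1/2"
  have "cmod (Ln (1 + (-z)) - (-z)) \<le> cmod (-z)^2 / (1 - cmod (-z))"
    by (rule Ln_approx_linear) (use z in simp)
  also have "\<dots> \<le> cmod z"
    using z mult_left_le[of "cmod z * 2" "cmod z"] by (simp add: power2_eq_square field_simps)
  finally show ?thesis
    using norm_triangle_ineq4[of "Ln (1 - z) + z" z] by simp
qed

lemma Li2_integrand_bound:
  assumes t: "0 < t" "t \<le> 1" and w: "cmod w \<le> M" "1 \<le> M" and cut: "t * Re w \<noteq> 1"
  shows "cmod (Ln (1 - of_real t * w) / of_real t)
    \<le> 2 * M * (1 + pi + ln (1 + M)) + 4 * M / sqrt \<bar>1 - t * Re w\<bar>"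
  (is "_ \<le> ?h")
proof -
  define z where "z = of_real t * w"
  have z: "cmod z \<le> t * M"
    using w t by (simp add: z_def norm_mult mult_left_mono)
  have lnM: "0 \<le> ln (1 + M)" "0 \<le> 4 * M / sqrt \<bar>1 - t * Re w\<bar>"
    using w by auto
  show ?thesis
  proof (cases "cmod z \<le> 1/2")
    case True
    have "cmod (Ln (1 - z)) \<le> 2 * (t * M)"
      using norm_Ln_one_minus_le[OF True] z by simp
    then have "cmod (Ln (1 - z) / of_real t) \<le> 2 * M"
      using t by (simp add: norm_divide field_simps)
    also have "\<dots> \<le> ?h"
      using lnM w pi_gt_zero by (simp add: algebra_simps)
    finally show ?thesis by (simp add: z_def)
  next
    case False
    then have inv_t: "1 / t \<le> 2 * M" using z t by (simp add: field_simps)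
    have "t * M \<le> M" using t w by (intro mult_left_le_one_le) auto
    then have "cmod (1 - z) \<le> 1 + M"
      using norm_triangle_ineq4[of 1 z] z by simp
    then have "cmod (Ln (1 - z)) \<le> ln (1 + M) + 2 / sqrt \<bar>1 - t * Re w\<bar> + pi"
      using norm_Ln_le[of "1 - z" "1 + M"] cut w by (simp add: z_def)
    then have "cmod (Ln (1 - z)) * (1 / t) \<le> (ln (1 + M) + 2 / sqrt \<bar>1 - t * Re w\<bar> + pi) * (2 * M)"
      using inv_t t lnM(1) pi_gt_zero by (intro mult_mono) auto
    then show ?thesis
      using t w by (simp add: z_def norm_divide algebra_simps)
  qed
qed

lemma integrable_inverse_sqrt_abs_one_minus:
  fixes a :: real assumes a: "1 < a"
  shows "(\<lambda>t. 1 / sqrt \<bar>1 - t * a\<bar>) integrable_on {0..1}"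
proof -
  have a0: "a > 0" using a by simp
  have mid: "0 \<le> 1/a" "1/a \<le> 1" using a by (auto simp: field_simps)
  define G1 where "G1 t = - 2 * sqrt (1 - t * a) / a" for t
  define G2 where "G2 t = 2 * sqrt (t * a - 1) / a" for t
  have "((\<lambda>t. 1 / sqrt \<bar>1 - t * a\<bar>) has_integral (G1 (1/a) - G1 0)) {0..1/a}"
  proof (rule fundamental_theorem_of_calculus_interior[OF mid(1)])
    show "continuous_on {0..1/a} G1"
      unfolding G1_def using a0 by (intro continuous_intros) auto
    fix x assume "x \<in> {0<..<1/a}"
    then have pos: "1 - x * a > 0" using a0 by (auto simp: field_simps)
    have "(G1 has_real_derivative 1 / sqrt \<bar>1 - x * a\<bar>) (at x)"
      unfolding G1_def using pos a0
      by (auto intro!: derivative_eq_intros simp: field_simps)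
    then show "(G1 has_vector_derivative 1 / sqrt \<bar>1 - x * a\<bar>) (at x)"
      by (simp add: has_real_derivative_iff_has_vector_derivative)
  qed
  moreover have "((\<lambda>t. 1 / sqrt \<bar>1 - t * a\<bar>) has_integral (G2 1 - G2 (1/a))) {1/a..1}"
  proof (rule fundamental_theorem_of_calculus_interior[OF mid(2)])
    show "continuous_on {1/a..1} G2"
      unfolding G2_def using a0 by (intro continuous_intros) auto
    fix x assume "x \<in> {1/a<..<1}"
    then have pos: "x * a - 1 > 0" using a0 by (auto simp: field_simps)
    have "(G2 has_real_derivative 1 / sqrt \<bar>1 - x * a\<bar>) (at x)"
      unfolding G2_def using pos a0
      by (auto intro!: derivative_eq_intros simp: field_simps abs_minus_commute)
    then show "(G2 has_vector_derivative 1 / sqrt \<bar>1 - x * a\<bar>) (at x)"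
      by (simp add: has_real_derivative_iff_has_vector_derivative)
  qed
  ultimately show ?thesis
    using has_integral_combine[OF mid] by blast
qed

lemma tendsto_Ln_from_upper_half:
  assumes f: "(f \<longlongrightarrow> r) F" and r: "Im r = 0" "Re r \<noteq> 0"
    and upper: "\<forall>\<^sub>F n in F. 0 < Im (f n)"
  shows "((\<lambda>n. Ln (f n)) \<longlongrightarrow> Ln r) F"
proof (cases "Re r < 0")
  case True
  have upper_Ln: "Ln (- z) + \<i> * pi = Ln z" if "0 < Im z" for z
    using Ln_minus[of z] that by (cases "z = 0") auto
  have "- r \<notin> \<real>\<^sub>\<le>\<^sub>0" using r True by (simp add: complex_nonpos_Reals_iff)
  then have "((\<lambda>n. Ln (- f n) + \<i> * pi) \<longlongrightarrow> Ln (- r) + \<i> * pi) F"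
    by (intro tendsto_intros isCont_tendsto_compose[OF continuous_at_Ln] f)
  moreover have "Ln (- r) + \<i> * pi = Ln r"
    using Ln_minus[of "- r"] r True by (cases "r = 0") simp_all
  moreover have "\<forall>\<^sub>F n in F. Ln (- f n) + \<i> * pi = Ln (f n)"
    using upper by eventually_elim (rule upper_Ln)
  ultimately show ?thesis
    by (metis Lim_transform_eventually)
next
  case False
  then have "r \<notin> \<real>\<^sub>\<le>\<^sub>0" using r by (auto simp: complex_nonpos_Reals_iff)
  then show ?thesis by (intro isCont_tendsto_compose[OF continuous_at_Ln] f)
qed

lemma tendsto_vertically_from_below: "(\<lambda>n. z - \<i> * of_real (inverse (Suc n))) \<longlonglongrightarrow> z"
proof -
  have "(\<lambda>n. of_real (inverse (Suc n)) :: complex) \<longlonglongrightarrow> of_real 0"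
    using LIMSEQ_inverse_real_of_nat by (intro tendsto_of_real) simp
  then have "(\<lambda>n. z - \<i> * of_real (inverse (Suc n))) \<longlonglongrightarrow> z - \<i> * 0"
    by (intro tendsto_intros) simp
  then show ?thesis by simp
qed

lemma Li2_integrand_tendsto_from_lower_half:
  fixes a t :: real assumes "0 < t" "t * a \<noteq> 1"
  shows "(\<lambda>n. Ln (1 - of_real t * (of_real a - \<i> * of_real (inverse (Suc n)))) / of_real t)
    \<longlonglongrightarrow> Ln (1 - of_real t * of_real a) / of_real t"
proof -
  have "0 < Im (1 - of_real t * (of_real a - \<i> * of_real (inverse (Suc n))))" for n
    using assms(1) by (simp add: field_simps power2_eq_square)
  then have "(\<lambda>n. Ln (1 - of_real t * (of_real a - \<i> * of_real (inverse (Suc n)))))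
      \<longlonglongrightarrow> Ln (1 - of_real t * of_real a)"
    using assms by (intro tendsto_Ln_from_upper_half tendsto_intros tendsto_vertically_from_below always_eventually)
      (auto simp: field_simps)
  then show ?thesis
    using assms(1) by (intro tendsto_divide tendsto_const) auto
qed

text \<open>Dominated convergence, with the integrable majorant \<open>1 / sqrt \<bar>1 - t a\<bar>\<close> for the logarithmic
  singularity at \<open>t = 1/a\<close>.\<close>
lemma Li2_tendsto_from_lower_half:
  fixes a :: real assumes a: "1 < a"
  shows "(\<lambda>n. Li2 (of_real a - \<i> * of_real (inverse (Suc n)))) \<longlonglongrightarrow> Li2 (of_real a)"
proof -
  define w :: "nat \<Rightarrow> complex" where "w n = of_real a - \<i> * of_real (inverse (Suc n))" for n
  define M where "M = a + 1"
  define S where "S = {0<..1::real} - {1/a}"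
  define \<phi> where "\<phi> n t = Ln (1 - of_real t * w n) / of_real t" for n t
  define \<psi> where "\<psi> t = Ln (1 - of_real t * of_real a) / of_real t" for t
  define h where "h t = 2 * M * (1 + pi + ln (1 + M)) + 4 * M / sqrt \<bar>1 - t * a\<bar>" for t
  have Re_w: "Re (w n) = a" and Im_w: "Im (w n) = - inverse (Suc n)" for n
    by (simp_all add: w_def field_simps power2_eq_square)
  have norm_w: "cmod (w n) \<le> M" for n
  proof -
    have "cmod (w n) \<le> cmod (of_real a) + cmod (\<i> * of_real (inverse (Suc n)))"
      unfolding w_def by (rule norm_triangle_ineq4)
    also have "\<dots> = a + \<bar>inverse (Suc n)\<bar>"
      using a by (simp only: norm_mult norm_of_real norm_ii)
    also have "\<dots> \<le> M" by (simp add: M_def inverse_le_1_iff del: of_nat_Suc)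
    finally show ?thesis .
  qed
  have S: "0 < t" "t \<le> 1" "t * a \<noteq> 1" if "t \<in> S" for t
    using that a by (auto simp: S_def field_simps)
  have negl: "negligible (({0..1} - S) \<union> (S - {0..1}))"
    by (rule negligible_subset[of "{0, 1/a}"]) (auto simp: S_def)
  have integral_S: "integral {0..1} g = integral S g" for g :: "real \<Rightarrow> complex"
    by (rule integral_spike_set; rule negligible_subset[OF negl]; blast)
  have integrable_S: "g integrable_on S" if "g integrable_on {0..1}" for g :: "real \<Rightarrow> 'b::banach"
    using integrable_spike_set_eq[OF negl] that by blast
  have "\<phi> n integrable_on S" for n
    using Li2_integrand_integrable[of "w n"] Im_w[of n] integrable_S
    by (simp add: \<phi>_def[abs_def] Li2_domain_iff)
  moreover have "h integrable_on S"
  proof (rule integrable_S)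
    have "(\<lambda>t. 4 * M * (1 / sqrt \<bar>1 - t * a\<bar>)) integrable_on {0..1}"
      using a by (intro integrable_on_mult_right integrable_inverse_sqrt_abs_one_minus)
    then show "h integrable_on {0..1}"
      unfolding h_def by (intro integrable_add integrable_const_ivl) simp
  qed
  moreover have "norm (\<phi> n t) \<le> h t" if "t \<in> S" for n t
    using Li2_integrand_bound[of t "w n" M] S[OF that] norm_w[of n] Re_w[of n] a
    unfolding \<phi>_def h_def M_def by simp
  moreover have "(\<lambda>n. \<phi> n t) \<longlonglongrightarrow> \<psi> t" if "t \<in> S" for t
    unfolding \<phi>_def \<psi>_def w_def using S(1,3)[OF that] by (rule Li2_integrand_tendsto_from_lower_half)
  ultimately have "(\<lambda>n. - integral S (\<phi> n)) \<longlonglongrightarrow> - integral S \<psi>"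
    by (intro tendsto_minus dominated_convergence(2))
  moreover have "Li2 (w n) = - integral S (\<phi> n)" for n
    unfolding Li2_def \<phi>_def integral_S ..
  moreover have "Li2 (of_real a) = - integral S \<psi>"
    unfolding Li2_def \<psi>_def integral_S ..
  ultimately show ?thesis
    unfolding w_def by simp
qed

section \<open>The reflection formula\<close>

lemma starlike_Li2_domain_minus_nonpos_Reals: "starlike (Li2_domain - \<real>\<^sub>\<le>\<^sub>0)"
  unfolding starlike_def
proof (intro bexI[of _ "1/2"] ballI subsetI)
  fix x y assume x: "x \<in> Li2_domain - \<real>\<^sub>\<le>\<^sub>0" and "y \<in> closed_segment (1/2) x"
  then obtain u where u: "0 \<le> u" "u \<le> 1" "y = (1 - u) *\<^sub>R (1/2) + u *\<^sub>R x"
    by (auto simp: closed_segment_def)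
  have Re: "Re y = (1 - u) / 2 + u * Re x" and Im: "Im y = u * Im x"
    using u by auto
  show "y \<in> Li2_domain - \<real>\<^sub>\<le>\<^sub>0"
  proof (cases "Im x = 0 \<and> u \<noteq> 0")
    case True
    then have "0 < Re x" "Re x < 1"
      using x by (auto simp: Li2_domain_iff complex_nonpos_Reals_iff)
    moreover have "0 < u" using u True by simp
    ultimately have "0 < u * Re x" "u * Re x < u * 1"
      by (simp, intro mult_strict_left_mono)
    have "0 < Re y"
      using Re u(2) \<open>0 < u * Re x\<close> by (simp add: field_simps)
    moreover have "Re y < 1"
      using Re u(2) \<open>u * Re x < u * 1\<close> by (simp add: field_simps)
    ultimately show ?thesis by (auto simp: Li2_domain_iff complex_nonpos_Reals_iff)
  next
    case False
    then have "Im y \<noteq> 0 \<or> Re y = 1/2"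
      using Re Im by auto
    then show ?thesis
      by (auto simp: Li2_domain_iff complex_nonpos_Reals_iff)
  qed
qed (auto simp: Li2_domain_iff complex_nonpos_Reals_iff)

lemma Li2_reflection_has_field_derivative:
  assumes w: "w \<in> Li2_domain - \<real>\<^sub>\<le>\<^sub>0"
  shows "((\<lambda>w. Li2 w + Li2 (1 - w) + Ln w * Ln (1 - w)) has_field_derivative 0) (at w)"
proof -
  have dom: "w \<in> Li2_domain" "1 - w \<in> Li2_domain" "w \<notin> \<real>\<^sub>\<le>\<^sub>0" "1 - w \<notin> \<real>\<^sub>\<le>\<^sub>0"
    using w by (auto simp: Li2_domain_def)
  then have nz: "w \<noteq> 0" "1 - w \<noteq> 0" by auto
  have "((\<lambda>w. Li2 (1 - w)) has_field_derivative - Li2_kernel (1 - w) * (- 1)) (at w)"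
    by (rule DERIV_chain2[where g="\<lambda>w. 1 - w", OF Li2_has_field_derivative[OF dom(2)]])
      (auto intro!: derivative_eq_intros)
  moreover have "((\<lambda>w. Ln (1 - w)) has_field_derivative inverse (1 - w) * (- 1)) (at w)"
    by (rule DERIV_chain2[where g="\<lambda>w. 1 - w", OF has_field_derivative_Ln[OF dom(4)]])
      (auto intro!: derivative_eq_intros)
  ultimately have "((\<lambda>w. Li2 w + Li2 (1 - w) + Ln w * Ln (1 - w)) has_field_derivative
      - Li2_kernel w + - Li2_kernel (1 - w) * (- 1) + (inverse w * Ln (1 - w) + inverse (1 - w) * (- 1) * Ln w))
      (at w)"
    by (intro DERIV_add DERIV_mult Li2_has_field_derivative[OF dom(1)] has_field_derivative_Ln[OF dom(3)])
  then show ?thesis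
    using nz by (simp add: Li2_kernel_def field_simps)
qed

text \<open>The constant is \<open>\<pi>\<^sup>2 / 6\<close>, but its value is never needed. The derivative vanishes off both
  cuts; the identity extends to \<open>(1, \<infinity>)\<close>, where \<open>Li2\<close> takes its boundary values from below, by
  continuity from below.\<close>
lemma Li2_reflection:
  obtains C where "\<And>w. w \<notin> \<real>\<^sub>\<le>\<^sub>0 \<Longrightarrow> w \<noteq> 1 \<Longrightarrow> Li2 w + Li2 (1 - w) + Ln w * Ln (1 - w) = C"
proof -
  define F where "F w = Li2 w + Li2 (1 - w) + Ln w * Ln (1 - w)" for w
  have "F constant_on (Li2_domain - \<real>\<^sub>\<le>\<^sub>0)"
  proof (rule has_field_derivative_0_imp_constant_on)
    show "(F has_field_derivative 0) (at w)" if "w \<in> Li2_domain - \<real>\<^sub>\<le>\<^sub>0" for w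
      unfolding F_def[abs_def] using that by (rule Li2_reflection_has_field_derivative)
    show "connected (Li2_domain - \<real>\<^sub>\<le>\<^sub>0)"
      by (rule starlike_imp_connected[OF starlike_Li2_domain_minus_nonpos_Reals])
    show "open (Li2_domain - \<real>\<^sub>\<le>\<^sub>0)"
      using open_Li2_domain by auto
  qed
  then obtain C where C: "\<And>w. w \<in> Li2_domain - \<real>\<^sub>\<le>\<^sub>0 \<Longrightarrow> F w = C"
    unfolding constant_on_def by blast
  have "F w = C" if w: "w \<notin> \<real>\<^sub>\<le>\<^sub>0" "w \<noteq> 1" for w
  proof (cases "w \<in> Li2_domain")
    case True
    then show ?thesis using w C by blast
  next
    case False
    define a where "a = Re w"
    have "Im w = 0" "1 \<le> a"
      using False by (auto simp: Li2_domain_iff a_def)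
    then have a: "w = of_real a" "1 < a"
      using w(2) by (auto simp: a_def complex_eq_iff)
    define u :: "nat \<Rightarrow> complex" where "u n = of_real a - \<i> * of_real (inverse (Suc n))" for n
    have Im_u: "Im (u n) = - inverse (Suc n)" for n
      by (simp add: u_def field_simps power2_eq_square)
    have u: "u \<longlonglongrightarrow> w"
      unfolding u_def a by (rule tendsto_vertically_from_below)
    have "(\<lambda>n. Li2 (u n)) \<longlonglongrightarrow> Li2 w"
      unfolding u_def a by (rule Li2_tendsto_from_lower_half[OF a(2)])
    moreover have "(\<lambda>n. Li2 (1 - u n)) \<longlonglongrightarrow> Li2 (1 - w)"
      using a by (intro isCont_tendsto_compose[OF isCont_Li2] tendsto_intros u) (simp add: Li2_domain_iff)
    moreover have "(\<lambda>n. Ln (u n)) \<longlonglongrightarrow> Ln w"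
      using w by (intro isCont_tendsto_compose[OF continuous_at_Ln] u)
    moreover have "(\<lambda>n. Ln (1 - u n)) \<longlonglongrightarrow> Ln (1 - w)"
      using a Im_u by (intro tendsto_Ln_from_upper_half tendsto_intros u) auto
    ultimately have "(\<lambda>n. F (u n)) \<longlonglongrightarrow> F w"
      unfolding F_def by (intro tendsto_add tendsto_mult)
    moreover have "F (u n) = C" for n
      using Im_u[of n] by (intro C) (simp add: Li2_domain_iff complex_nonpos_Reals_iff)
    ultimately show ?thesis
      using LIMSEQ_unique[OF _ tendsto_const] by simp
  qed
  then show ?thesis
    using that unfolding F_def by blast
qed

section \<open>The lifted dilogarithm modulo \<open>2\<pi>\<^sup>2\<close>\<close>

definition int_multiple :: "complex \<Rightarrow> complex \<Rightarrow> bool" where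
  "int_multiple P z \<longleftrightarrow> (\<exists>n::int. z = of_int n * P)"

lemma int_multiple_0 [simp]: "int_multiple P 0"
  unfolding int_multiple_def by (intro exI[of _ 0]) simp

lemma int_multiple_of_int [simp]: "int_multiple P (of_int n * P)"
  unfolding int_multiple_def by blast

lemma int_multiple_add: "int_multiple P a \<Longrightarrow> int_multiple P b \<Longrightarrow> int_multiple P (a + b)"
  unfolding int_multiple_def by (metis distrib_right of_int_add)

lemma int_multiple_minus: "int_multiple P a \<Longrightarrow> int_multiple P (- a)"
  unfolding int_multiple_def by (metis mult_minus_left of_int_minus)

lemma int_multiple_mult_of_int: "int_multiple P a \<Longrightarrow> int_multiple P (of_int k * a)"
  unfolding int_multiple_def by (metis mult.assoc of_int_mult)

lemma int_multiple_sum: "(\<And>i. i \<in> I \<Longrightarrow> int_multiple P (f i)) \<Longrightarrow> int_multiple P (\<Sum>i\<in>I. f i)"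
  by (induction I rule: infinite_finite_induct) (auto intro: int_multiple_add)

lemma int_multiple_mult: "int_multiple P a \<Longrightarrow> int_multiple (c * P) (c * a)"
  unfolding int_multiple_def by (metis mult.left_commute)

lemma int_multiple_minus_period: "int_multiple (- P) a \<longleftrightarrow> int_multiple P a"
  unfolding int_multiple_def by (metis minus_minus mult_minus_left mult_minus_right of_int_minus)

lemma int_multiple_small_eq_0:
  assumes "int_multiple P a" "cmod a < cmod P" shows "a = 0"
proof -
  obtain n :: int where n: "a = of_int n * P" using assms(1) by (auto simp: int_multiple_def)
  then have "\<bar>real_of_int n\<bar> * cmod P < 1 * cmod P" using assms(2) by (simp add: norm_mult)
  then have "\<bar>real_of_int n\<bar> < 1" by (simp add: mult_less_cancel_right2)
  then have "n = 0" by linarith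
  then show ?thesis using n by simp
qed

lemma exp_eq_imp_2pi_multiple:
  assumes "exp u = exp v" obtains n :: int where "u = v + of_int n * (2 * of_real pi * \<i>)"
proof -
  obtain n :: int where "u = v + (of_int (2 * n) * pi) * \<i>" using assms unfolding exp_eq by blast
  then show ?thesis by (intro that[of n]) simp
qed

lemma Ln_exp_2pi_multiple: "int_multiple (2 * of_real pi * \<i>) (z - Ln (exp z))"
proof -
  obtain n :: int where "z = Ln (exp z) + of_int n * (2 * of_real pi * \<i>)"
    using exp_eq_imp_2pi_multiple[of z "Ln (exp z)"] by auto
  then show ?thesis by (metis add_diff_cancel_left' int_multiple_of_int)
qed

lemma two_pi_i_squared: "(2 * of_real pi * \<i>) * (2 * of_real pi * \<i>) = - 2 * (2 * of_real (pi^2) :: complex)"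
  by (simp add: power2_eq_square algebra_simps)

text \<open>\<open>p\<close> and \<open>q\<close> are the integers \<open>p\<^sup>0\<close> and \<open>p\<^sup>1\<close> in the definition of the lifted dilogarithm;
  \<open>p\<^sup>1\<close> is an integer because of the relation \<open>e\<^sup>z\<^sup>1 (1 - e\<^sup>z\<^sup>0) = 1\<close>.\<close>
lemma lifted_dilog_expand:
  assumes rel: "exp z1 * (1 - exp z0) = 1"
  obtains p q :: int where
    "Ln (exp z0) = z0 - of_int p * (2 * of_real pi * \<i>)"
    "Ln (1 - exp z0) = - z1 + of_int q * (2 * of_real pi * \<i>)"
    "lifted_dilog z0 z1 = Li2 (exp z0) + Ln (exp z0) * Ln (1 - exp z0) / 2 - of_real (pi^2) / 6
        + of_real pi * \<i> * (of_int p * Ln (1 - exp z0) + of_int q * Ln (exp z0))"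
proof -
  define T :: complex where "T = 2 * of_real pi * \<i>"
  have T: "T \<noteq> 0" "of_real pi * \<i> = T / 2" by (simp_all add: T_def)
  have "1 - exp z0 \<noteq> 0" using rel by auto
  then have "exp z1 = exp (- Ln (1 - exp z0))"
    using rel by (simp add: exp_minus field_simps)
  then obtain q :: int where q: "z1 = - Ln (1 - exp z0) + of_int q * T"
    using exp_eq_imp_2pi_multiple unfolding T_def by blast
  obtain p :: int where "z0 - Ln (exp z0) = of_int p * T"
    using Ln_exp_2pi_multiple[of z0] unfolding T_def int_multiple_def by blast
  then have p: "Ln (exp z0) = z0 - of_int p * T" by (simp add: algebra_simps)
  have "(z0 - Ln (exp z0)) / T = of_int p" "(z1 + Ln (1 - exp z0)) / T = of_int q"
    using p q T by simp_all
  then have "lifted_dilog z0 z1 = Li2 (exp z0) + Ln (exp z0) * Ln (1 - exp z0) / 2 - of_real (pi^2) / 6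
        + of_real pi * \<i> * (of_int p * Ln (1 - exp z0) + of_int q * Ln (exp z0))"
    unfolding lifted_dilog_def Let_def T_def[symmetric] by simp
  moreover have "Ln (1 - exp z0) = - z1 + of_int q * T" using q by simp
  ultimately show ?thesis using p that unfolding T_def by blast
qed

lemma lifted_dilog_cong_Li2:
  assumes "exp z1 * (1 - exp z0) = 1"
  shows "int_multiple (2 * of_real (pi^2))
    (lifted_dilog z0 z1 - (Li2 (exp z0) - of_real (pi^2) / 6 + z0 * Ln (1 - exp z0) + z0 * z1 / 2))"
proof -
  obtain p q :: int where p: "Ln (exp z0) = z0 - of_int p * (2 * of_real pi * \<i>)"
    and q: "Ln (1 - exp z0) = - z1 + of_int q * (2 * of_real pi * \<i>)"
    and L: "lifted_dilog z0 z1 = Li2 (exp z0) + Ln (exp z0) * Ln (1 - exp z0) / 2 - of_real (pi^2) / 6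
        + of_real pi * \<i> * (of_int p * Ln (1 - exp z0) + of_int q * Ln (exp z0))"
    using lifted_dilog_expand[OF assms] by blast
  have "lifted_dilog z0 z1 - (Li2 (exp z0) - of_real (pi^2) / 6 + z0 * Ln (1 - exp z0) + z0 * z1 / 2)
      = - (of_int p * of_int q * ((2 * of_real pi * \<i>) * (2 * of_real pi * \<i>))) / 2"
    unfolding L p q by (simp add: field_simps)
  also have "\<dots> = of_int (p * q) * (2 * of_real (pi^2))"
    unfolding two_pi_i_squared by simp
  finally show ?thesis by (metis int_multiple_of_int)
qed

lemma lifted_dilog_cong_reflected:
  assumes "exp z1 * (1 - exp z0) = 1"
    and "Li2 (exp z0) + Li2 (1 - exp z0) + Ln (exp z0) * Ln (1 - exp z0) = C"
  shows "int_multiple (2 * of_real (pi^2))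
    (lifted_dilog z0 z1 - (C - Li2 (1 - exp z0) - of_real (pi^2) / 6 - z0 * z1 / 2 + z1 * Ln (exp z0)))"
proof -
  obtain p q :: int where p: "Ln (exp z0) = z0 - of_int p * (2 * of_real pi * \<i>)"
    and q: "Ln (1 - exp z0) = - z1 + of_int q * (2 * of_real pi * \<i>)"
    and L: "lifted_dilog z0 z1 = Li2 (exp z0) + Ln (exp z0) * Ln (1 - exp z0) / 2 - of_real (pi^2) / 6
        + of_real pi * \<i> * (of_int p * Ln (1 - exp z0) + of_int q * Ln (exp z0))"
    using lifted_dilog_expand[OF assms(1)] by blast
  have Li2: "Li2 (exp z0) = C - Li2 (1 - exp z0) - Ln (exp z0) * Ln (1 - exp z0)"
    using assms(2) by (simp add: algebra_simps)
  have "lifted_dilog z0 z1 - (C - Li2 (1 - exp z0) - of_real (pi^2) / 6 - z0 * z1 / 2 + z1 * Ln (exp z0))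
      = of_int p * of_int q * ((2 * of_real pi * \<i>) * (2 * of_real pi * \<i>)) / 2"
    unfolding L Li2 p q by (simp add: field_simps)
  also have "\<dots> = of_int (- (p * q)) * (2 * of_real (pi^2))"
    unfolding two_pi_i_squared by simp
  finally show ?thesis by (metis int_multiple_of_int)
qed

lemma lifted_dilog_shift:
  "int_multiple (2 * of_real (pi^2))
    (lifted_dilog z0 (z1 + of_int j * (2 * of_real pi * \<i>)) - lifted_dilog z0 z1 - of_int j * (of_real pi * \<i>) * z0)"
proof -
  obtain p :: int where "z0 - Ln (exp z0) = of_int p * (2 * of_real pi * \<i>)"
    using Ln_exp_2pi_multiple[of z0] unfolding int_multiple_def by blast
  then have p: "Ln (exp z0) = z0 - of_int p * (2 * of_real pi * \<i>)" by (simp add: algebra_simps)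
  have "lifted_dilog z0 (z1 + of_int j * (2 * of_real pi * \<i>)) - lifted_dilog z0 z1
      = of_real pi * \<i> * of_int j * Ln (exp z0)"
    unfolding lifted_dilog_def Let_def by (simp add: field_simps)
  also have "\<dots> = of_int j * (of_real pi * \<i>) * z0 + of_int (j * p) * (2 * of_real (pi^2))"
    unfolding p by (simp add: algebra_simps power2_eq_square)
  finally have "lifted_dilog z0 (z1 + of_int j * (2 * of_real pi * \<i>)) - lifted_dilog z0 z1
      - of_int j * (of_real pi * \<i>) * z0 = of_int (j * p) * (2 * of_real (pi^2))"
    by simp
  then show ?thesis by (metis int_multiple_of_int)
qed

section \<open>Continuity modulo a period\<close>

definition continuous_mod_at :: "complex \<Rightarrow> 'a::t2_space set \<Rightarrow> ('a \<Rightarrow> complex) \<Rightarrow> 'a \<Rightarrow> bool" where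
  "continuous_mod_at P S f x \<longleftrightarrow>
     (\<exists>g. continuous (at x within S) g \<and> (\<forall>\<^sub>F y in nhds x. y \<in> S \<longrightarrow> int_multiple P (f y - g y)))"

lemma continuous_mod_onI:
  assumes "\<And>x. x \<in> S \<Longrightarrow> continuous_mod_at P S f x"
  shows "continuous_mod_on P S f"
  unfolding continuous_mod_on_def
proof (intro ballI allI impI)
  fix x e assume x: "x \<in> S" and e: "(e::real) > 0"
  obtain g where g: "continuous (at x within S) g"
    and fg: "\<forall>\<^sub>F y in nhds x. y \<in> S \<longrightarrow> int_multiple P (f y - g y)"
    using assms[OF x] unfolding continuous_mod_at_def by blast
  obtain m :: int where m: "f x - g x = of_int m * P"
    using eventually_nhds_x_imp_x[OF fg] x by (auto simp: int_multiple_def)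
  have "\<forall>\<^sub>F y in at x within S. dist (g y) (g x) < e"
    using g e by (simp add: continuous_within tendsto_iff)
  moreover have "\<forall>\<^sub>F y in at x within S. int_multiple P (f y - g y)"
    using fg unfolding eventually_at_filter by eventually_elim auto
  ultimately show "\<forall>\<^sub>F y in at x within S. \<exists>n::int. cmod (f y - f x - of_int n * P) < e"
  proof eventually_elim
    case (elim y)
    then obtain n :: int where n: "f y - g y = of_int n * P" by (auto simp: int_multiple_def)
    have "f y - f x - of_int (n - m) * P = g y - g x" using n m by (simp add: algebra_simps)
    then show ?case using elim(1) by (intro exI[of _ "n - m"]) (simp add: dist_norm)
  qed
qed

lemma continuous_within_eventually_mem:
  assumes "continuous (at x within S) f" "open U" "f x \<in> U"
  shows "\<forall>\<^sub>F y in nhds x. y \<in> S \<longrightarrow> f y \<in> U"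
proof -
  have "\<forall>\<^sub>F y in at x within S. f y \<in> U"
    using assms by (auto simp: continuous_within intro: topological_tendstoD)
  then show ?thesis
    unfolding eventually_at_filter by (rule eventually_mono) (use assms(3) in auto)
qed

lemma continuous_mod_at_cong:
  assumes "continuous_mod_at P S f x" "\<forall>\<^sub>F y in nhds x. y \<in> S \<longrightarrow> int_multiple P (g y - f y)"
  shows "continuous_mod_at P S g x"
proof -
  obtain h where "continuous (at x within S) h" "\<forall>\<^sub>F y in nhds x. y \<in> S \<longrightarrow> int_multiple P (f y - h y)"
    using assms(1) unfolding continuous_mod_at_def by blast
  moreover have "\<forall>\<^sub>F y in nhds x. y \<in> S \<longrightarrow> int_multiple P (g y - h y)"
    using assms(2) calculation(2)
    by eventually_elim (metis diff_add_cancel add_diff_eq int_multiple_add)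
  ultimately show ?thesis
    unfolding continuous_mod_at_def by blast
qed

lemma continuous_imp_continuous_mod_at:
  "continuous (at x within S) f \<Longrightarrow> continuous_mod_at P S f x"
  unfolding continuous_mod_at_def by (intro exI[of _ f]) auto

lemma continuous_mod_at_add:
  assumes "continuous_mod_at P S f x" "continuous_mod_at P S g x"
  shows "continuous_mod_at P S (\<lambda>y. f y + g y) x"
proof -
  obtain f' g' where f': "continuous (at x within S) f'" "\<forall>\<^sub>F y in nhds x. y \<in> S \<longrightarrow> int_multiple P (f y - f' y)"
    and g': "continuous (at x within S) g'" "\<forall>\<^sub>F y in nhds x. y \<in> S \<longrightarrow> int_multiple P (g y - g' y)"
    using assms unfolding continuous_mod_at_def by blast
  have "\<forall>\<^sub>F y in nhds x. y \<in> S \<longrightarrow> int_multiple P (f y + g y - (f' y + g' y))"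
    using f'(2) g'(2) by eventually_elim (metis add_diff_add int_multiple_add)
  then show ?thesis
    unfolding continuous_mod_at_def using f'(1) g'(1) by (intro exI[of _ "\<lambda>y. f' y + g' y"]) (auto intro: continuous_intros)
qed

lemma continuous_mod_at_sum:
  "(\<And>i. i \<in> I \<Longrightarrow> continuous_mod_at P S (f i) x) \<Longrightarrow> continuous_mod_at P S (\<lambda>y. \<Sum>i\<in>I. f i y) x"
  by (induction I rule: infinite_finite_induct)
    (auto intro: continuous_mod_at_add continuous_imp_continuous_mod_at)

lemma continuous_mod_at_mult:
  assumes "continuous_mod_at P S f x"
  shows "continuous_mod_at (c * P) S (\<lambda>y. c * f y) x"
proof -
  obtain g where "continuous (at x within S) g" "\<forall>\<^sub>F y in nhds x. y \<in> S \<longrightarrow> int_multiple P (f y - g y)"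
    using assms unfolding continuous_mod_at_def by blast
  then show ?thesis
    unfolding continuous_mod_at_def
    by (intro exI[of _ "\<lambda>y. c * g y"] conjI continuous_intros)
      (auto elim!: eventually_mono dest: int_multiple_mult[where c=c] simp: right_diff_distrib)
qed

lemma continuous_mod_at_mult_of_int:
  assumes "continuous_mod_at P S f x"
  shows "continuous_mod_at P S (\<lambda>y. of_int k * f y) x"
proof -
  obtain g where "continuous (at x within S) g" "\<forall>\<^sub>F y in nhds x. y \<in> S \<longrightarrow> int_multiple P (f y - g y)"
    using assms unfolding continuous_mod_at_def by blast
  then show ?thesis
    unfolding continuous_mod_at_def
    by (intro exI[of _ "\<lambda>y. of_int k * g y"] conjI continuous_intros)
      (auto elim!: eventually_mono dest: int_multiple_mult_of_int[where k=k] simp: right_diff_distrib)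
qed

lemma continuous_mod_at_minus_period:
  "continuous_mod_at (- P) S f x \<longleftrightarrow> continuous_mod_at P S f x"
  by (simp add: continuous_mod_at_def int_multiple_minus_period)

lemma continuous_mod_at_rotate_period:
  assumes "e = 1 \<or> e = -1" "continuous_mod_at (- \<i> * of_int e * P) S f x"
  shows "continuous_mod_at (P * \<i>) S f x"
proof -
  have "- \<i> * of_int e * P = - (P * \<i>) \<or> - \<i> * of_int e * P = P * \<i>"
    using assms(1) by auto
  then show ?thesis
    using assms(2) continuous_mod_at_minus_period by metis
qed

lemma continuous_within_log_branch:
  fixes K :: "'a::t2_space \<Rightarrow> complex"
  assumes K: "continuous (at x within S) K" "K x \<noteq> 0"
  obtains L where "continuous (at x within S) L" "\<And>y. K y \<noteq> 0 \<Longrightarrow> exp (L y) = K y"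
proof (cases "K x \<in> \<real>\<^sub>\<le>\<^sub>0")
  case True
  then have "- K x \<notin> \<real>\<^sub>\<le>\<^sub>0"
    using K(2) True by (auto simp: complex_nonpos_Reals_iff complex_eq_iff)
  then have "continuous (at x within S) (\<lambda>y. Ln (- K y) + \<i> * pi)"
    using K(1) by (intro continuous_intros continuous_within_compose3[OF continuous_at_Ln])
  moreover have "exp (Ln (- K y) + \<i> * pi) = K y" if "K y \<noteq> 0" for y
    using that by (simp add: exp_add)
  ultimately show ?thesis using that by blast
next
  case False
  then have "continuous (at x within S) (\<lambda>y. Ln (K y))"
    using K(1) by (intro continuous_within_compose3[OF continuous_at_Ln])
  then show ?thesis using that by simp
qed

lemma continuous_mod_at_lifted_dilog:
  assumes x: "x \<in> S"
    and z0: "continuous (at x within S) z0" and z1: "continuous (at x within S) z1"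
    and rel: "\<forall>\<^sub>F y in nhds x. y \<in> S \<longrightarrow> exp (z1 y) * (1 - exp (z0 y)) = 1"
  shows "continuous_mod_at (2 * of_real (pi^2)) S (\<lambda>y. lifted_dilog (z0 y) (z1 y)) x"
proof (cases "exp (z0 x) \<in> Li2_domain")
  case True
  have exp_z0: "continuous (at x within S) (\<lambda>y. exp (z0 y))"
    using z0 by (intro continuous_intros)
  have "isCont Ln (1 - exp (z0 x))"
    using True by (intro continuous_at_Ln) (simp add: Li2_domain_def)
  moreover have "continuous (at x within S) (\<lambda>y. 1 - exp (z0 y))"
    using z0 by (intro continuous_intros)
  ultimately have "continuous (at x within S) (\<lambda>y. Ln (1 - exp (z0 y)))"
    by (rule continuous_within_compose3)
  moreover have "continuous (at x within S) (\<lambda>y. Li2 (exp (z0 y)))"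
    using isCont_Li2[OF True] exp_z0 by (rule continuous_within_compose3)
  ultimately have "continuous (at x within S)
      (\<lambda>y. Li2 (exp (z0 y)) - of_real (pi^2) / 6 + z0 y * Ln (1 - exp (z0 y)) + z0 y * z1 y / 2)"
    using z0 z1 by (intro continuous_intros) auto
  moreover have "\<forall>\<^sub>F y in nhds x. y \<in> S \<longrightarrow> int_multiple (2 * of_real (pi^2)) (lifted_dilog (z0 y) (z1 y)
      - (Li2 (exp (z0 y)) - of_real (pi^2) / 6 + z0 y * Ln (1 - exp (z0 y)) + z0 y * z1 y / 2))"
    using rel by eventually_elim (blast intro: lifted_dilog_cong_Li2)
  ultimately show ?thesis
    by (rule continuous_mod_at_cong[OF continuous_imp_continuous_mod_at])
next
  case False
  then have not_cut: "exp (z0 x) \<notin> \<real>\<^sub>\<le>\<^sub>0"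
    by (auto simp: Li2_domain_iff complex_nonpos_Reals_iff)
  obtain C where C: "\<And>w. w \<notin> \<real>\<^sub>\<le>\<^sub>0 \<Longrightarrow> w \<noteq> 1 \<Longrightarrow> Li2 w + Li2 (1 - w) + Ln w * Ln (1 - w) = C"
    using Li2_reflection by blast
  have exp_z0: "continuous (at x within S) (\<lambda>y. exp (z0 y))"
    using z0 by (intro continuous_intros)
  have "isCont Li2 (1 - exp (z0 x))"
    using not_cut by (intro isCont_Li2) (simp add: Li2_domain_def)
  moreover have "continuous (at x within S) (\<lambda>y. 1 - exp (z0 y))"
    using z0 by (intro continuous_intros)
  ultimately have "continuous (at x within S) (\<lambda>y. Li2 (1 - exp (z0 y)))"
    by (rule continuous_within_compose3)
  moreover have "continuous (at x within S) (\<lambda>y. Ln (exp (z0 y)))"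
    using continuous_at_Ln[OF not_cut] exp_z0 by (rule continuous_within_compose3)
  ultimately have "continuous (at x within S)
      (\<lambda>y. C - Li2 (1 - exp (z0 y)) - of_real (pi^2) / 6 - z0 y * z1 y / 2 + z1 y * Ln (exp (z0 y)))"
    using z0 z1 by (intro continuous_intros) auto
  moreover have "\<forall>\<^sub>F y in nhds x. y \<in> S \<longrightarrow> exp (z0 y) \<in> - \<real>\<^sub>\<le>\<^sub>0"
    using not_cut z0 by (intro continuous_within_eventually_mem) (auto intro: continuous_intros)
  then have "\<forall>\<^sub>F y in nhds x. y \<in> S \<longrightarrow> int_multiple (2 * of_real (pi^2)) (lifted_dilog (z0 y) (z1 y)
      - (C - Li2 (1 - exp (z0 y)) - of_real (pi^2) / 6 - z0 y * z1 y / 2 + z1 y * Ln (exp (z0 y))))"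
    using rel
  proof eventually_elim
    case (elim y)
    show ?case
    proof
      assume "y \<in> S"
      with elim have rel_y: "exp (z1 y) * (1 - exp (z0 y)) = 1" and "exp (z0 y) \<notin> \<real>\<^sub>\<le>\<^sub>0"
        by auto
      moreover have "exp (z0 y) \<noteq> 1" using rel_y by auto
      ultimately show "int_multiple (2 * of_real (pi^2)) (lifted_dilog (z0 y) (z1 y)
          - (C - Li2 (1 - exp (z0 y)) - of_real (pi^2) / 6 - z0 y * z1 y / 2 + z1 y * Ln (exp (z0 y))))"
        by (intro lifted_dilog_cong_reflected C)
    qed
  qed
  ultimately show ?thesis
    by (rule continuous_mod_at_cong[OF continuous_imp_continuous_mod_at])
qed

section \<open>Alternating sums of lifted dilogarithms\<close>

text \<open>With \<open>K = e\<^sup>\<theta> / (1 - q)\<close>, this is the shape of the volume of a crossing: the signed sum of the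
  \<open>L(z i, Log K + c i)\<close>, and at \<open>q = 1\<close> (a pinched crossing) a quadratic expression instead.\<close>
definition dilog_sum :: "'i set \<Rightarrow> ('i \<Rightarrow> int) \<Rightarrow> ('i \<Rightarrow> complex) \<Rightarrow> ('i \<Rightarrow> complex) \<Rightarrow> complex \<Rightarrow> complex \<Rightarrow> complex" where
  "dilog_sum I s z c q \<theta> =
     (if q = 1 then - (\<Sum>i\<in>I. of_int (s i) * z i * c i) / 2
      else \<Sum>i\<in>I. of_int (s i) * lifted_dilog (z i) (Ln (exp \<theta> / (1 - q)) + c i))"

locale dilog_sum_family =
  fixes I :: "'i set" and s :: "'i \<Rightarrow> int"
    and z c :: "'i \<Rightarrow> 'a::t2_space \<Rightarrow> complex" and q \<theta> :: "'a \<Rightarrow> complex" and S :: "'a set"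
  assumes finite_I: "finite I"
    and sum_s: "(\<Sum>i\<in>I. s i) = 0"
    and sum_sz: "\<And>y. y \<in> S \<Longrightarrow> (\<Sum>i\<in>I. of_int (s i) * z i y) = 0"
    and relation: "\<And>i y. i \<in> I \<Longrightarrow> y \<in> S \<Longrightarrow> exp (\<theta> y + c i y) * (1 - exp (z i y)) = 1 - q y"
begin

abbreviation V :: "'a \<Rightarrow> complex" where
  "V y \<equiv> dilog_sum I s (\<lambda>i. z i y) (\<lambda>i. c i y) (q y) (\<theta> y)"

lemma relation_Ln:
  assumes "i \<in> I" "y \<in> S" "q y \<noteq> 1" "exp L = exp (\<theta> y) / (1 - q y)"
  shows "exp (L + c i y) * (1 - exp (z i y)) = 1"
proof -
  have "exp (L + c i y) * (1 - exp (z i y)) = exp (\<theta> y + c i y) * (1 - exp (z i y)) / (1 - q y)"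
    using assms(4) by (simp add: exp_add)
  also have "\<dots> = 1"
    using relation[OF assms(1,2)] assms(3) by simp
  finally show ?thesis .
qed

text \<open>Modulo \<open>2\<pi>\<^sup>2\<close>, \<open>V\<close> does not depend on the branch of \<open>Log K\<close>: another branch shifts the second
  arguments by \<open>2\<pi>i j\<close>, and by \<open>lifted_dilog_shift\<close> the changes add up to a multiple of
  \<open>\<Sum>i\<in>I. s i * z i = 0\<close>.\<close>
lemma dilog_sum_cong_log_branch:
  assumes y: "y \<in> S" "q y \<noteq> 1" and L: "exp L = exp (\<theta> y) / (1 - q y)"
  shows "int_multiple (2 * of_real (pi^2))
    (V y - (\<Sum>i\<in>I. of_int (s i) * lifted_dilog (z i y) (L + c i y)))"
proof -
  have "exp (Ln (exp (\<theta> y) / (1 - q y))) = exp L"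
    using y(2) L by simp
  then obtain j :: int where j: "Ln (exp (\<theta> y) / (1 - q y)) = L + of_int j * (2 * of_real pi * \<i>)"
    by (rule exp_eq_imp_2pi_multiple)
  have "int_multiple (2 * of_real (pi^2)) (\<Sum>i\<in>I. of_int (s i) *
      (lifted_dilog (z i y) ((L + c i y) + of_int j * (2 * of_real pi * \<i>))
       - lifted_dilog (z i y) (L + c i y) - of_int j * (of_real pi * \<i>) * z i y))"
    by (intro int_multiple_sum int_multiple_mult_of_int lifted_dilog_shift)
  also have "(\<Sum>i\<in>I. of_int (s i) *
      (lifted_dilog (z i y) ((L + c i y) + of_int j * (2 * of_real pi * \<i>))
       - lifted_dilog (z i y) (L + c i y) - of_int j * (of_real pi * \<i>) * z i y))
    = V y - (\<Sum>i\<in>I. of_int (s i) * lifted_dilog (z i y) (L + c i y))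
      - of_int j * (of_real pi * \<i>) * (\<Sum>i\<in>I. of_int (s i) * z i y)"
    using y(2) j by (simp add: dilog_sum_def algebra_simps sum_subtractf sum_distrib_left sum.distrib)
  finally show ?thesis
    using sum_sz[OF y(1)] by simp
qed

lemma continuous_mod_at_off_pinch:
  assumes x: "x \<in> S" "q x \<noteq> 1"
    and cont: "continuous (at x within S) q" "continuous (at x within S) \<theta>"
      "\<And>i. i \<in> I \<Longrightarrow> continuous (at x within S) (z i)"
      "\<And>i. i \<in> I \<Longrightarrow> continuous (at x within S) (c i)"
  shows "continuous_mod_at (2 * of_real (pi^2)) S V x"
proof -
  define K where "K y = exp (\<theta> y) / (1 - q y)" for y
  have "continuous (at x within S) K" "K x \<noteq> 0"
    using x cont(1,2) unfolding K_def by (auto intro!: continuous_intros)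
  then obtain L where L: "continuous (at x within S) L" "\<And>y. K y \<noteq> 0 \<Longrightarrow> exp (L y) = K y"
    using continuous_within_log_branch by blast
  have near: "\<forall>\<^sub>F y in nhds x. y \<in> S \<longrightarrow> q y \<in> - {1}"
    using x by (intro continuous_within_eventually_mem cont) auto
  have "continuous_mod_at (2 * of_real (pi^2)) S
      (\<lambda>y. \<Sum>i\<in>I. of_int (s i) * lifted_dilog (z i y) (L y + c i y)) x"
  proof (intro continuous_mod_at_sum continuous_mod_at_mult_of_int continuous_mod_at_lifted_dilog)
    fix i assume i: "i \<in> I"
    show "continuous (at x within S) (\<lambda>y. L y + c i y)"
      using L(1) cont(4)[OF i] by (intro continuous_intros)
    show "\<forall>\<^sub>F y in nhds x. y \<in> S \<longrightarrow> exp (L y + c i y) * (1 - exp (z i y)) = 1"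
      using near by eventually_elim (auto intro!: relation_Ln i simp: L(2) K_def)
  qed (use x cont in auto)
  moreover have "\<forall>\<^sub>F y in nhds x. y \<in> S \<longrightarrow> int_multiple (2 * of_real (pi^2))
      (V y - (\<Sum>i\<in>I. of_int (s i) * lifted_dilog (z i y) (L y + c i y)))"
    using near
  proof eventually_elim
    case (elim y)
    show ?case
    proof
      assume y: "y \<in> S"
      then have "q y \<noteq> 1" using elim by auto
      with y show "int_multiple (2 * of_real (pi^2))
          (V y - (\<Sum>i\<in>I. of_int (s i) * lifted_dilog (z i y) (L y + c i y)))"
        by (intro dilog_sum_cong_log_branch) (simp_all add: L(2) K_def)
    qed
  qed
  ultimately show ?thesis
    by (rule continuous_mod_at_cong)
qed

lemma exp_eq_1_at_pinch: "i \<in> I \<Longrightarrow> y \<in> S \<Longrightarrow> q y = 1 \<Longrightarrow> exp (z i y) = 1"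
  using relation[of i y] by simp

lemma continuous_near_pinch:
  assumes "x \<in> S" "q x = 1" "i \<in> I" and z: "continuous (at x within S) (z i)"
  shows "continuous (at x within S) (\<lambda>y. Ln (exp (z i y)))"
    "continuous (at x within S) (\<lambda>y. Li2 (1 - exp (z i y)))"
proof -
  have exp_z: "exp (z i x) = 1"
    using exp_eq_1_at_pinch assms(1-3) by blast
  have "isCont Ln (exp (z i x))"
    by (simp add: exp_z continuous_at_Ln complex_nonpos_Reals_iff)
  then show "continuous (at x within S) (\<lambda>y. Ln (exp (z i y)))"
    using continuous_exp[OF z] by (rule continuous_within_compose3)
  have "isCont Li2 (1 - exp (z i x))"
    by (simp add: exp_z isCont_Li2 Li2_domain_iff)
  then show "continuous (at x within S) (\<lambda>y. Li2 (1 - exp (z i y)))"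
    using continuous_diff[OF continuous_const continuous_exp[OF z]] by (rule continuous_within_compose3)
qed

text \<open>The alternating sum of the \<open>Ln e\<^sup>z\<^sup>i\<close> lies in \<open>2\<pi>i \<int>\<close> since \<open>\<Sum>i\<in>I. s i * z i = 0\<close>, and it is
  continuous near a pinched point, where it vanishes.\<close>
lemma eventually_Ln_exp_sum_eq_0_near_pinch:
  assumes x: "x \<in> S" "q x = 1" and cont: "\<And>i. i \<in> I \<Longrightarrow> continuous (at x within S) (z i)"
  shows "\<forall>\<^sub>F y in nhds x. y \<in> S \<longrightarrow>
    (\<forall>i\<in>I. exp (z i y) \<notin> \<real>\<^sub>\<le>\<^sub>0) \<and> (\<Sum>i\<in>I. of_int (s i) * Ln (exp (z i y))) = 0"
proof -
  define \<Lambda> where "\<Lambda> y = (\<Sum>i\<in>I. of_int (s i) * Ln (exp (z i y)))" for y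
  have "continuous (at x within S) \<Lambda>"
    unfolding \<Lambda>_def using continuous_near_pinch(1)[OF x _ cont] by (intro continuous_intros)
  moreover have "\<Lambda> x = 0"
    using exp_eq_1_at_pinch[OF _ x] by (simp add: \<Lambda>_def)
  ultimately have small: "\<forall>\<^sub>F y in nhds x. y \<in> S \<longrightarrow> \<Lambda> y \<in> ball 0 (2 * pi)"
    by (intro continuous_within_eventually_mem) auto
  have "\<forall>\<^sub>F y in nhds x. y \<in> S \<longrightarrow> exp (z i y) \<in> - \<real>\<^sub>\<le>\<^sub>0" if "i \<in> I" for i
    using cont[OF that]
    by (intro continuous_within_eventually_mem continuous_exp)
      (use exp_eq_1_at_pinch[OF that x] in \<open>auto simp: complex_nonpos_Reals_iff\<close>)
  then have "\<forall>\<^sub>F y in nhds x. \<forall>i\<in>I. y \<in> S \<longrightarrow> exp (z i y) \<in> - \<real>\<^sub>\<le>\<^sub>0"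
    using finite_I by (intro eventually_ball_finite) auto
  with small show ?thesis
  proof eventually_elim
    case (elim y)
    show ?case
    proof
      assume y: "y \<in> S"
      have "int_multiple (2 * of_real pi * \<i>) (\<Sum>i\<in>I. of_int (s i) * (Ln (exp (z i y)) - z i y))"
        using Ln_exp_2pi_multiple
        by (intro int_multiple_sum int_multiple_mult_of_int) (metis int_multiple_minus minus_diff_eq)
      moreover have "(\<Sum>i\<in>I. of_int (s i) * (Ln (exp (z i y)) - z i y)) = \<Lambda> y"
        using sum_sz[OF y] by (simp add: \<Lambda>_def right_diff_distrib sum_subtractf)
      ultimately have "\<Lambda> y = 0"
        using elim y by (intro int_multiple_small_eq_0[of "2 * of_real pi * \<i>"]) (auto simp: norm_mult)
      then show "(\<forall>i\<in>I. exp (z i y) \<notin> \<real>\<^sub>\<le>\<^sub>0) \<and> (\<Sum>i\<in>I. of_int (s i) * Ln (exp (z i y))) = 0"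
        using elim y by (auto simp: \<Lambda>_def)
    qed
  qed
qed

definition reflected_sum :: "complex \<Rightarrow> 'a \<Rightarrow> complex" where
  "reflected_sum C y = (\<Sum>i\<in>I. of_int (s i) *
      (C - of_real (pi^2) / 6 - Li2 (1 - exp (z i y)) + c i y * Ln (exp (z i y))))
    - (\<Sum>i\<in>I. of_int (s i) * z i y * c i y) / 2"

text \<open>Near a pinched point the reflection formula applies to every term at once, and the unbounded
  \<open>Ln K\<close> only multiplies the alternating sums of the \<open>z i\<close> and of the \<open>Ln e\<^sup>z\<^sup>i\<close>, which vanish.\<close>
lemma dilog_sum_cong_reflected_sum:
  assumes y: "y \<in> S"
    and C: "\<And>w. w \<notin> \<real>\<^sub>\<le>\<^sub>0 \<Longrightarrow> w \<noteq> 1 \<Longrightarrow> Li2 w + Li2 (1 - w) + Ln w * Ln (1 - w) = C"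
    and off_cut: "\<forall>i\<in>I. exp (z i y) \<notin> \<real>\<^sub>\<le>\<^sub>0"
    and Ln_sum: "(\<Sum>i\<in>I. of_int (s i) * Ln (exp (z i y))) = 0"
  shows "int_multiple (2 * of_real (pi^2)) (V y - reflected_sum C y)"
proof (cases "q y = 1")
  case True
  then have "exp (z i y) = 1" if "i \<in> I" for i
    using exp_eq_1_at_pinch[OF that y] by simp
  then have "reflected_sum C y = (C - of_real (pi^2) / 6 - Li2 0) * of_int (\<Sum>i\<in>I. s i)
      - (\<Sum>i\<in>I. of_int (s i) * z i y * c i y) / 2"
    by (simp add: reflected_sum_def sum_distrib_right mult.commute)
  then show ?thesis
    using True by (simp add: dilog_sum_def sum_s)
next
  case False
  define LK where "LK = Ln (exp (\<theta> y) / (1 - q y))"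
  define R where "R i = C - Li2 (1 - exp (z i y)) - of_real (pi^2) / 6
      - z i y * (LK + c i y) / 2 + (LK + c i y) * Ln (exp (z i y))" for i
  have "int_multiple (2 * of_real (pi^2))
      (\<Sum>i\<in>I. of_int (s i) * (lifted_dilog (z i y) (LK + c i y) - R i))"
  proof (intro int_multiple_sum int_multiple_mult_of_int)
    fix i assume i: "i \<in> I"
    have rel: "exp (LK + c i y) * (1 - exp (z i y)) = 1"
      using False by (intro relation_Ln i y) (simp_all add: LK_def)
    then have "exp (z i y) \<noteq> 1" by auto
    then show "int_multiple (2 * of_real (pi^2)) (lifted_dilog (z i y) (LK + c i y) - R i)"
      unfolding R_def using rel off_cut i by (intro lifted_dilog_cong_reflected C) auto
  qed
  moreover have "(\<Sum>i\<in>I. of_int (s i) * R i) = reflected_sum C y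
      - LK / 2 * (\<Sum>i\<in>I. of_int (s i) * z i y) + LK * (\<Sum>i\<in>I. of_int (s i) * Ln (exp (z i y)))"
    by (simp add: R_def reflected_sum_def algebra_simps sum.distrib sum_subtractf sum_distrib_left
        sum_divide_distrib add_divide_distrib)
  ultimately show ?thesis
    using False Ln_sum sum_sz[OF y]
    by (simp add: dilog_sum_def LK_def right_diff_distrib sum_subtractf)
qed

lemma continuous_mod_at_pinch:
  assumes x: "x \<in> S" "q x = 1"
    and cont: "\<And>i. i \<in> I \<Longrightarrow> continuous (at x within S) (z i)"
      "\<And>i. i \<in> I \<Longrightarrow> continuous (at x within S) (c i)"
  shows "continuous_mod_at (2 * of_real (pi^2)) S V x"
proof -
  obtain C where C: "\<And>w. w \<notin> \<real>\<^sub>\<le>\<^sub>0 \<Longrightarrow> w \<noteq> 1 \<Longrightarrow> Li2 w + Li2 (1 - w) + Ln w * Ln (1 - w) = C"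
    using Li2_reflection by blast
  have "continuous (at x within S) (reflected_sum C)"
    unfolding reflected_sum_def[abs_def]
    using cont continuous_near_pinch[OF x _ cont(1)] by (intro continuous_intros) auto
  moreover have "\<forall>\<^sub>F y in nhds x. y \<in> S \<longrightarrow>
      (\<forall>i\<in>I. exp (z i y) \<notin> \<real>\<^sub>\<le>\<^sub>0) \<and> (\<Sum>i\<in>I. of_int (s i) * Ln (exp (z i y))) = 0"
    by (rule eventually_Ln_exp_sum_eq_0_near_pinch[OF x]) (rule cont(1))
  then have "\<forall>\<^sub>F y in nhds x. y \<in> S \<longrightarrow> int_multiple (2 * of_real (pi^2)) (V y - reflected_sum C y)"
  proof (rule eventually_mono, intro impI)
    fix y assume "y \<in> S \<longrightarrow> (\<forall>i\<in>I. exp (z i y) \<notin> \<real>\<^sub>\<le>\<^sub>0) \<and> (\<Sum>i\<in>I. of_int (s i) * Ln (exp (z i y))) = 0"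
      and y: "y \<in> S"
    then show "int_multiple (2 * of_real (pi^2)) (V y - reflected_sum C y)"
      by (intro dilog_sum_cong_reflected_sum[OF y C]) auto
  qed
  ultimately show ?thesis
    by (rule continuous_mod_at_cong[OF continuous_imp_continuous_mod_at])
qed

lemma continuous_mod_at_dilog_sum:
  assumes "x \<in> S"
    and "continuous (at x within S) q" "continuous (at x within S) \<theta>"
      "\<And>i. i \<in> I \<Longrightarrow> continuous (at x within S) (z i)"
      "\<And>i. i \<in> I \<Longrightarrow> continuous (at x within S) (c i)"
  shows "continuous_mod_at (2 * of_real (pi^2)) S V x"
  using assms continuous_mod_at_off_pinch continuous_mod_at_pinch by (cases "q x = 1") auto

end

section \<open>The volume of a crossing\<close>

text \<open>The corners N, W, S, E of a crossing are indexed 0, 1, 2, 3. At a non-pinched crossing the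
  four lifted dilogarithms of the volume have first arguments \<open>corner_zeta0\<close> and second arguments
  \<open>2 \<pi> i \<kappa> + corner_zeta1_offset\<close>.\<close>
definition corner_zeta0 :: "('c, 's, 'r, 'j) diagram \<Rightarrow> 'c \<Rightarrow> ('s, 'r, 'j) params \<Rightarrow> nat \<Rightarrow> complex" where
  "corner_zeta0 D c p i =
     (let mu1 = fst p (comp D (seg1 D c)); mu2 = fst p (comp D (seg2 D c));
          b1 = fst (snd p) (seg1 D c); b2 = fst (snd p) (seg2 D c);
          b1' = fst (snd p) (seg1' D c); b2' = fst (snd p) (seg2' D c)
      in 2 * of_real pi * \<i> * of_int (sgn D c) *
         [b2' - b1, b2 - b1 - mu1, b2 - b1' + mu2 - mu1, b2' - b1' + mu2] ! i)"

definition corner_zeta1_offset :: "('c, 's, 'r, 'j) diagram \<Rightarrow> 'c \<Rightarrow> ('s, 'r, 'j) params \<Rightarrow> nat \<Rightarrow> complex" where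
  "corner_zeta1_offset D c p i =
     (let \<epsilon> = of_int (sgn D c); mu1 = fst p (comp D (seg1 D c)); mu2 = fst p (comp D (seg2 D c));
          gamma = snd (snd p)
      in 2 * of_real pi * \<i> *
         [- gamma (regN D c), \<epsilon> * mu1 - gamma (regW D c),
          \<epsilon> * (mu1 - mu2) - gamma (regS D c), - \<epsilon> * mu2 - gamma (regE D c)] ! i)"

lemma sum_lessThan_4: "(\<Sum>i<4::nat. f i) = f 0 + f 1 + f 2 + (f 3 :: 'a::comm_monoid_add)"
  by (simp add: eval_nat_numeral add.assoc)

lemma pinched_volume_identity:
  fixes be1 be2 be1' be2' mu1 mu2 gN gS gW gE T E :: complex
  assumes E: "E * E = 1" and T: "T * T = - 4 * of_real (pi^2)"
  shows "2 * of_real (pi^2) * \<i> * (be1 * (gW - gN) - be1' * (gS - gE) + be2 * (gS - gW) - be2' * (gE - gN)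
             - mu1 * (E * (be1 - be1' + mu2) + gS - gW)
             - mu2 * (E * (be2' - be2 + mu1) + gE - gS))
   = \<i> * E / 2 * ((T*E*(be2' - be1)) * (T*(-gN)) - (T*E*(be2 - be1 - mu1)) * (T*(E*mu1 - gW))
       + (T*E*(be2 - be1' + mu2 - mu1)) * (T*(E*(mu1 - mu2) - gS)) - (T*E*(be2' - be1' + mu2)) * (T*(-E*mu2 - gE)))"
proof -
  have "\<i> * E / 2 * ((T*E*(be2' - be1)) * (T*(-gN)) - (T*E*(be2 - be1 - mu1)) * (T*(E*mu1 - gW))
       + (T*E*(be2 - be1' + mu2 - mu1)) * (T*(E*(mu1 - mu2) - gS)) - (T*E*(be2' - be1' + mu2)) * (T*(-E*mu2 - gE)))
     = \<i> / 2 * (T * T) * ((E*E) * ((be2' - be1) * (-gN) - (be2 - be1 - mu1) * (-gW) + (be2 - be1' + mu2 - mu1) * (-gS) - (be2' - be1' + mu2) * (-gE))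
        + (E * E) * E * (- (be2 - be1 - mu1) * mu1 + (be2 - be1' + mu2 - mu1) * (mu1 - mu2) + (be2' - be1' + mu2) * mu2))"
    by (simp add: algebra_simps)
  also have "\<dots> = 2 * of_real (pi^2) * \<i> * (be1 * (gW - gN) - be1' * (gS - gE) + be2 * (gS - gW) - be2' * (gE - gN)
             - mu1 * (E * (be1 - be1' + mu2) + gS - gW)
             - mu2 * (E * (be2' - be2 + mu1) + gE - gS))"
    unfolding E T by (simp add: algebra_simps)
  finally show ?thesis by simp
qed

lemma exp_corner_zeta0_0:
  assumes "sgn D c = 1 \<or> sgn D c = -1"
  shows "exp (corner_zeta0 D c p 0) = (shp_b p (seg2' D c) / shp_b p (seg1 D c)) powi sgn D c"
  using assms by (auto simp: corner_zeta0_def shp_b_def e2pi_def right_diff_distrib exp_diff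
      power_int_minus exp_minus_inverse field_simps)

lemma pinched_iff_exp_corner_zeta0_0:
  assumes "sgn D c = 1 \<or> sgn D c = -1"
  shows "pinched D p c \<longleftrightarrow> exp (corner_zeta0 D c p 0) = 1"
  using assms exp_corner_zeta0_0[OF assms, of p] by (auto simp: pinched_def shp_b_def e2pi_def power_int_minus)

lemma crossing_vol_eq_dilog_sum:
  assumes sgn: "sgn D c = 1 \<or> sgn D c = -1"
  shows "crossing_vol D p c = - \<i> * of_int (sgn D c) *
    dilog_sum {..<4} (\<lambda>i. (-1)^i) (corner_zeta0 D c p) (corner_zeta1_offset D c p)
      (exp (corner_zeta0 D c p 0)) (2 * of_real pi * \<i> * snd (snd p) (regN D c))"
proof -
  define T E :: complex where "T = 2 * of_real pi * \<i>" and "E = of_int (sgn D c)"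
  define mu1 mu2 where "mu1 = fst p (comp D (seg1 D c))" and "mu2 = fst p (comp D (seg2 D c))"
  define b1 b2 b1' b2' where "b1 = fst (snd p) (seg1 D c)" and "b2 = fst (snd p) (seg2 D c)"
    and "b1' = fst (snd p) (seg1' D c)" and "b2' = fst (snd p) (seg2' D c)"
  define gN gW gS gE where "gN = snd (snd p) (regN D c)" and "gW = snd (snd p) (regW D c)"
    and "gS = snd (snd p) (regS D c)" and "gE = snd (snd p) (regE D c)"
  define K where "K = exp (T * gN) / (1 - exp (T * E * (b2' - b1)))"
  have T: "T \<noteq> 0" "T * T = - 4 * of_real (pi^2)"
    by (simp_all add: T_def power2_eq_square algebra_simps)
  have E: "E * E = 1"
    using sgn by (auto simp: E_def)
  have zeta0: "corner_zeta0 D c p i = T * E * [b2' - b1, b2 - b1 - mu1, b2 - b1' + mu2 - mu1, b2' - b1' + mu2] ! i" for i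
    by (simp add: corner_zeta0_def Let_def T_def E_def mu1_def mu2_def b1_def b2_def b1'_def b2'_def)
  have zeta1: "corner_zeta1_offset D c p i = T * [- gN, E * mu1 - gW, E * (mu1 - mu2) - gS, - E * mu2 - gE] ! i" for i
    by (simp add: corner_zeta1_offset_def Let_def T_def E_def mu1_def mu2_def gN_def gW_def gS_def gE_def)
  have K_eq: "e2pi gN / (1 - (shp_b p (seg2' D c) / shp_b p (seg1 D c)) powi sgn D c) = K"
    using exp_corner_zeta0_0[OF sgn, of p] zeta0[of 0] by (simp add: K_def T_def e2pi_def)
  note pinched = pinched_iff_exp_corner_zeta0_0[OF sgn, of p]
  have vol: "crossing_vol D p c = (if pinched D p c then
      2 * of_real (pi^2) * \<i> * (b1 * (gW - gN) - b1' * (gS - gE) + b2 * (gS - gW) - b2' * (gE - gN)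
             - mu1 * (E * (b1 - b1' + mu2) + gS - gW)
             - mu2 * (E * (b2' - b2 + mu1) + gE - gS))
    else - \<i> * E *
      (lifted_dilog (T * E * (b2' - b1)) (T * (Ln K / T - gN))
     - lifted_dilog (T * E * (b2 - b1 - mu1)) (T * (Ln K / T - gW + E * mu1))
     + lifted_dilog (T * E * (b2 - b1' + mu2 - mu1)) (T * (Ln K / T - gS + E * (mu1 - mu2)))
     - lifted_dilog (T * E * (b2' - b1' + mu2)) (T * (Ln K / T - gE - E * mu2))))"
    unfolding crossing_vol_def Let_def K_eq[symmetric]
    by (simp only: mu1_def mu2_def b1_def b2_def b1'_def b2'_def gN_def gS_def gW_def gE_def E_def T_def)
  show ?thesis
  proof (cases "pinched D p c")
    case True
    then have "crossing_vol D p c =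
        2 * of_real (pi^2) * \<i> * (b1 * (gW - gN) - b1' * (gS - gE) + b2 * (gS - gW) - b2' * (gE - gN)
             - mu1 * (E * (b1 - b1' + mu2) + gS - gW)
             - mu2 * (E * (b2' - b2 + mu1) + gE - gS))"
      unfolding vol by simp
    also have "\<dots> = \<i> * E / 2 * ((T*E*(b2' - b1)) * (T*(-gN)) - (T*E*(b2 - b1 - mu1)) * (T*(E*mu1 - gW))
       + (T*E*(b2 - b1' + mu2 - mu1)) * (T*(E*(mu1 - mu2) - gS)) - (T*E*(b2' - b1' + mu2)) * (T*(-E*mu2 - gE)))"
      by (rule pinched_volume_identity[OF E T(2)])
    finally show ?thesis
      using True pinched unfolding dilog_sum_def sum_lessThan_4 zeta0 zeta1
      by (simp add: E_def[symmetric] field_simps)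
  next
    case False
    have "T * (Ln K / T - gN) = Ln K + T * (- gN)"
      "T * (Ln K / T - gW + E * mu1) = Ln K + T * (E * mu1 - gW)"
      "T * (Ln K / T - gS + E * (mu1 - mu2)) = Ln K + T * (E * (mu1 - mu2) - gS)"
      "T * (Ln K / T - gE - E * mu2) = Ln K + T * (- E * mu2 - gE)"
      using T(1) by (simp_all add: field_simps)
    then show ?thesis
      using False pinched
      unfolding vol dilog_sum_def sum_lessThan_4 zeta0 zeta1 nth_Cons_0 T_def[symmetric] gN_def[symmetric]
        K_def[symmetric] E_def[symmetric]
      by simp
  qed
qed

lemma shaping_at_positive_relations:
  assumes "shaping_at D p c" "sgn D c = 1"
  defines "m1 \<equiv> shp_m D p (seg1 D c)" and "m2 \<equiv> shp_m D p (seg2 D c)"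
    and "a1 \<equiv> shp_a D p (seg1 D c)" and "a2 \<equiv> shp_a D p (seg2 D c)" and "a2' \<equiv> shp_a D p (seg2' D c)"
    and "b1 \<equiv> shp_b p (seg1 D c)" and "b2 \<equiv> shp_b p (seg2 D c)"
    and "b1' \<equiv> shp_b p (seg1' D c)" and "b2' \<equiv> shp_b p (seg2' D c)"
  shows "1 - b2 / (b1 * m1) = (1 - b2' / b1) * (a1 / m1)"
    "1 - b2 * m2 / (b1' * m1) = (1 - b2' / b1) * (a1 * a2 * m2 / m1)"
    "1 - b2' * m2 / b1' = (1 - b2' / b1) * (a2' * m2)"
proof -
  have nz: "m1 \<noteq> 0" "m2 \<noteq> 0" "a1 \<noteq> 0" "a2 \<noteq> 0" "b1 \<noteq> 0" "b2 \<noteq> 0"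
    by (simp_all add: assms(3-) shp_m_def shp_a_def shp_b_def e2pi_def)
  have Q: "1 - m2 * a2 * (1 - b2 / (m1 * b1)) \<noteq> 0"
    and a2': "a2' = a2 * (1 - m1 * b1 / b2 * (1 - a1 / m1) * (1 - 1 / (m2 * a2)))"
    and b1': "b1' = m2 * b2 / m1 / (1 - m2 * a2 * (1 - b2 / (m1 * b1)))"
    and b2': "b2' = b1 * (1 - m1 / a1 * (1 - b2 / (m1 * b1)))"
    using assms(1,2) unfolding shaping_at_def Let_def assms(3-) by auto
  show "1 - b2 / (b1 * m1) = (1 - b2' / b1) * (a1 / m1)"
    unfolding b2' using nz by (simp add: field_simps)
  show "1 - b2 * m2 / (b1' * m1) = (1 - b2' / b1) * (a1 * a2 * m2 / m1)"
    unfolding b2' b1' using nz Q by (simp add: field_simps)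
  show "1 - b2' * m2 / b1' = (1 - b2' / b1) * (a2' * m2)"
    unfolding b2' b1' a2' using nz Q by (simp add: field_simps)
qed

lemma shaping_at_negative_relations:
  assumes "shaping_at D p c" "sgn D c = -1"
  defines "m1 \<equiv> shp_m D p (seg1 D c)" and "m2 \<equiv> shp_m D p (seg2 D c)"
    and "a1 \<equiv> shp_a D p (seg1 D c)" and "a2 \<equiv> shp_a D p (seg2 D c)" and "a2' \<equiv> shp_a D p (seg2' D c)"
    and "b1 \<equiv> shp_b p (seg1 D c)" and "b2 \<equiv> shp_b p (seg2 D c)"
    and "b1' \<equiv> shp_b p (seg1' D c)" and "b2' \<equiv> shp_b p (seg2' D c)"
  shows "1 - b1 * m1 / b2 = (1 - b1 / b2') * (a1 * m1)"
    "1 - b1' * m1 / (b2 * m2) = (1 - b1 / b2') * (a1 * a2 * m1 / m2)"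
    "1 - b1' / (b2' * m2) = (1 - b1 / b2') * (a2' / m2)"
proof -
  have nz: "m1 \<noteq> 0" "m2 \<noteq> 0" "a1 \<noteq> 0" "a2 \<noteq> 0" "b1 \<noteq> 0" "b2 \<noteq> 0" "b1' \<noteq> 0"
    by (simp_all add: assms(3-) shp_m_def shp_a_def shp_b_def e2pi_def)
  have Q: "1 - 1 / (m1 * a1) * (1 - m1 * b1 / b2) \<noteq> 0"
    and a2': "a2' = a2 * (1 - b2 / (m1 * b1) * (1 - m1 * a1) * (1 - m2 / a2))"
    and b1': "b1' = m2 * b2 / m1 * (1 - a2 / m2 * (1 - m1 * b1 / b2))"
    and b2': "b2' = b1 / (1 - 1 / (m1 * a1) * (1 - m1 * b1 / b2))"
    using assms(1,2) unfolding shaping_at_def Let_def assms(3-) by auto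
  show "1 - b1 * m1 / b2 = (1 - b1 / b2') * (a1 * m1)"
    unfolding b2' using nz Q by (simp add: field_simps)
  show "1 - b1' * m1 / (b2 * m2) = (1 - b1 / b2') * (a1 * a2 * m1 / m2)"
    unfolding b2' b1' using nz Q by (simp add: field_simps)
  show "1 - b1' / (b2' * m2) = (1 - b1 / b2') * (a2' / m2)"
    using nz(7) unfolding b2' b1' a2' using nz Q by (simp add: field_simps)
qed

lemma corner_relation_factored:
  assumes D: "link_diagram D" "c \<in> crossings D" and sh: "shaping_at D p c" and i: "i < 4"
  shows "1 - exp (corner_zeta0 D c p i) = (1 - exp (corner_zeta0 D c p 0))
      * exp (- (2 * of_real pi * \<i> * snd (snd p) (regN D c) + corner_zeta1_offset D c p i))"
proof -
  have sgn: "sgn D c = 1 \<or> sgn D c = -1"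
    and regions: "lreg D (seg1 D c) = regN D c" "rreg D (seg1 D c) = regW D c"
      "lreg D (seg2 D c) = regW D c" "rreg D (seg2 D c) = regS D c"
      "lreg D (seg2' D c) = regN D c" "rreg D (seg2' D c) = regE D c"
    using D unfolding link_diagram_def by auto
  define X where "X i = exp (- (2 * of_real pi * \<i> * snd (snd p) (regN D c) + corner_zeta1_offset D c p i))" for i
  define m1 m2 a1 a2 a2' where "m1 = shp_m D p (seg1 D c)" and "m2 = shp_m D p (seg2 D c)"
    and "a1 = shp_a D p (seg1 D c)" and "a2 = shp_a D p (seg2 D c)" and "a2' = shp_a D p (seg2' D c)"
  define b1 b2 b1' b2' where "b1 = shp_b p (seg1 D c)" and "b2 = shp_b p (seg2 D c)"
    and "b1' = shp_b p (seg1' D c)" and "b2' = shp_b p (seg2' D c)"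
  note shp_defs = m1_def m2_def a1_def a2_def a2'_def b1_def b2_def b1'_def b2'_def
  note exp_simps = corner_zeta0_def corner_zeta1_offset_def X_def Let_def regions shp_defs
    shp_m_def shp_a_def shp_b_def e2pi_def right_diff_distrib distrib_left exp_add exp_diff exp_minus
  have "X 0 = 1"
    by (simp add: X_def corner_zeta1_offset_def)
  have "1 - exp (corner_zeta0 D c p i) = (1 - exp (corner_zeta0 D c p 0)) * X i"
  proof (cases "sgn D c = 1")
    case True
    have "exp (corner_zeta0 D c p 0) = b2' / b1" "exp (corner_zeta0 D c p 1) = b2 / (b1 * m1)"
      "exp (corner_zeta0 D c p 2) = b2 * m2 / (b1' * m1)" "exp (corner_zeta0 D c p 3) = b2' * m2 / b1'"
      "X 1 = a1 / m1" "X 2 = a1 * a2 * m2 / m1" "X 3 = a2' * m2"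
      using True by (simp_all add: exp_simps field_simps)
    then show ?thesis
      using shaping_at_positive_relations[OF sh True, folded shp_defs] \<open>X 0 = 1\<close> i
      by (auto simp: less_Suc_eq numeral_eq_Suc)
  next
    case False
    then have neg: "sgn D c = -1" using sgn by simp
    have "exp (corner_zeta0 D c p 0) = b1 / b2'" "exp (corner_zeta0 D c p 1) = b1 * m1 / b2"
      "exp (corner_zeta0 D c p 2) = b1' * m1 / (b2 * m2)" "exp (corner_zeta0 D c p 3) = b1' / (b2' * m2)"
      "X 1 = a1 * m1" "X 2 = a1 * a2 * m1 / m2" "X 3 = a2' / m2"
      using neg by (simp_all add: exp_simps field_simps)
    then show ?thesis
      using shaping_at_negative_relations[OF sh neg, folded shp_defs] \<open>X 0 = 1\<close> i
      by (auto simp: less_Suc_eq numeral_eq_Suc)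
  qed
  then show ?thesis
    by (simp add: X_def)
qed

lemma corner_relation:
  assumes "link_diagram D" "c \<in> crossings D" "shaping_at D p c" "i < 4"
  shows "exp (2 * of_real pi * \<i> * snd (snd p) (regN D c) + corner_zeta1_offset D c p i)
      * (1 - exp (corner_zeta0 D c p i)) = 1 - exp (corner_zeta0 D c p 0)"
  unfolding corner_relation_factored[OF assms] by (simp add: mult.left_commute mult_exp_exp)

lemma continuous_at_within_apply:
  fixes f :: "'a::t2_space \<Rightarrow> 'b::countable \<Rightarrow> 'c::metric_space"
  assumes "continuous (at x within S) f"
  shows "continuous (at x within S) (\<lambda>y. f y j)"
proof -
  have "isCont (\<lambda>g. g j) (f x)"
    using continuous_on_product_coordinates[of j] continuous_on_eq_continuous_at[OF open_UNIV] by blast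
  then show ?thesis
    using assms by (rule continuous_within_compose3)
qed

lemma continuous_params:
  fixes x :: "('s::finite, 'r::finite, 'j::finite) params"
  shows "continuous (at x within S) (\<lambda>p. fst p j)" "continuous (at x within S) (\<lambda>p. fst (snd p) k)"
    "continuous (at x within S) (\<lambda>p. snd (snd p) r)"
  by (rule continuous_at_within_apply; intro continuous_fst continuous_snd continuous_ident)+

lemma continuous_corner_zeta:
  fixes D :: "('c, 's::finite, 'r::finite, 'j::finite) diagram"
  assumes "i < 4"
  shows "continuous (at x within S) (\<lambda>p. corner_zeta0 D c p i)"
    "continuous (at x within S) (\<lambda>p. corner_zeta1_offset D c p i)"
  using assms
  by (auto simp: corner_zeta0_def corner_zeta1_offset_def Let_def less_Suc_eq numeral_eq_Suc
      intro!: continuous_intros continuous_params)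

lemma dilog_sum_family_crossing:
  fixes D :: "('c, 's::finite, 'r::finite, 'j::finite) diagram"
  assumes D: "link_diagram D" "c \<in> crossings D"
  shows "dilog_sum_family {..<4} (\<lambda>i. (-1)^i) (\<lambda>i p. corner_zeta0 D c p i) (\<lambda>i p. corner_zeta1_offset D c p i)
    (\<lambda>p. exp (corner_zeta0 D c p 0)) (\<lambda>p. 2 * of_real pi * \<i> * snd (snd p) (regN D c)) (flat_space D)"
proof
  show "(\<Sum>i<4::nat. (-1::int)^i) = 0"
    by (simp add: sum_lessThan_4)
  show "(\<Sum>i<4. of_int ((-1)^i) * corner_zeta0 D c p i) = 0" for p
    by (simp add: sum_lessThan_4 corner_zeta0_def Let_def algebra_simps)
  fix i :: nat and p assume i: "i \<in> {..<4}" and p: "p \<in> flat_space D"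
  have "shaping_at D p c"
    using p D(2) unfolding flat_space_def by blast
  moreover have "i < 4"
    using i by simp
  ultimately show "exp (2 * of_real pi * \<i> * snd (snd p) (regN D c) + corner_zeta1_offset D c p i)
      * (1 - exp (corner_zeta0 D c p i)) = 1 - exp (corner_zeta0 D c p 0)"
    by (rule corner_relation[OF D])
qed simp

lemma continuous_mod_at_crossing_vol:
  fixes D :: "('c, 's::finite, 'r::finite, 'j::finite) diagram"
  assumes D: "link_diagram D" "c \<in> crossings D" and x: "x \<in> flat_space D"
  shows "continuous_mod_at (2 * of_real (pi^2) * \<i>) (flat_space D) (\<lambda>p. crossing_vol D p c) x"
proof -
  interpret dilog_sum_family "{..<4}" "\<lambda>i. (-1)^i" "\<lambda>i p. corner_zeta0 D c p i"
    "\<lambda>i p. corner_zeta1_offset D c p i" "\<lambda>p. exp (corner_zeta0 D c p 0)"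
    "\<lambda>p. 2 * of_real pi * \<i> * snd (snd p) (regN D c)" "flat_space D"
    by (rule dilog_sum_family_crossing[OF D])
  have sgn: "sgn D c = 1 \<or> sgn D c = -1"
    using D unfolding link_diagram_def by auto
  have "continuous (at x within flat_space D) (\<lambda>p. exp (corner_zeta0 D c p 0))"
    using continuous_corner_zeta(1)[of 0] by (rule continuous_exp) simp
  moreover have "continuous (at x within flat_space D) (\<lambda>p. 2 * of_real pi * \<i> * snd (snd p) (regN D c))"
    using continuous_params(3) by (rule continuous_mult[OF continuous_const])
  ultimately have "continuous_mod_at (2 * of_real (pi^2)) (flat_space D) V x"
    using x continuous_corner_zeta by (intro continuous_mod_at_dilog_sum) simp_all
  then have "continuous_mod_at (- \<i> * of_int (sgn D c) * (2 * of_real (pi^2))) (flat_space D)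
      (\<lambda>p. crossing_vol D p c) x"
    unfolding crossing_vol_eq_dilog_sum[OF sgn] by (rule continuous_mod_at_mult)
  with sgn show ?thesis
    by (rule continuous_mod_at_rotate_period)
qed

theorem lemma3p6:
  fixes D :: "('c, 's::finite, 'r::finite, 'j::finite) diagram"
  assumes "link_diagram D"
  shows "continuous_mod_on (2 * of_real (pi^2) * \<i>) (flat_space D) (diagram_vol D)"
proof (rule continuous_mod_onI)
  fix x assume "x \<in> flat_space D"
  then show "continuous_mod_at (2 * of_real (pi^2) * \<i>) (flat_space D) (diagram_vol D) x"
    unfolding diagram_vol_def
    by (intro continuous_mod_at_sum continuous_mod_at_crossing_vol assms)
qed

end
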